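(* (The Fundamental Lemma.) For any graph $G$, $$\mathrm{Abl}(G)=\min_{G'\subset G} l_{\mathrm{Abl}}(G'),$$ where the minimum is taken over all subgraphs $G'$ of $G$ that are connected, have Euler characteristic $-1$, and have no leaves. If no such $G'$ exists, then the minimum is taken to be $\infty$, $\mathrm{Abl}(G)=\infty$, and there is no closed non-backtracking walk in $G$ (of positive length) that traverses each edge the same number of times in both directions.
   Context: A graph is $G=(V_G,E_G,t_G,h_G)$ with vertex set $V_G$, edge set $E_G$ and tail/head maps $t_G,h_G:E_G\to V_G$ (loops and multiple edges allowed). For finite $G$, its Euler characteristic is $\chi(G)=|V_G|-|E_G|$. Directed edges are $D_G=E_G\times\{+,-\}$, with $h(e,+)=t(e,-)=h(e)$, $t(e,+)=h(e,-)=t(e)$; $(e,+)$ and $(e,-)$ are inverses of each other. A walk of length $m\ge1$ is a sequence $(u_1,\dots,u_m)$ of directed edges with $h(u_i)=t(u_{i+1})$; it is closed if $t(u_1)=h(u_m)$, non-backtracking if $u_{i+1}\ne u_i^{-1}$ for all $i$. A path is a non-backtracking walk with distinct endpoints using each edge at most once; a cycle is a closed non-backtracking walk with $u_m\neq u_1^{-1}$ using each edge at most once. A leaf is a vertex of degree one. The abelian girth $\mathrm{Abl}(G)$ is the minimum $m\ge1$ such that there is a closed non-backtracking walk $(u_1,\dots,u_m)$ in which, for every $e\in E_G$, $(e,+)$ appears as many times as $(e,-)$ (and $\infty$ if there is none). A connected leafless graph of Euler characteristic $-1$ is exactly one of: a figure-eight graph (two mutually edge-disjoint cycles with the same endpoint),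 a barbell graph (two cycles $w_1,w_2$ and a path $b$, the bar, all mutually edge-disjoint, with $b$ joining the endpoints of $w_1$ and $w_2$), or a theta graph (two vertices joined by three mutually edge-disjoint paths). For such a graph $G'$, its abelian length $l_{\mathrm{Abl}}(G')$ is twice its number of edges, except that each edge of the bar (when $G'$ is a barbell graph) is counted four times. *)

theory Defs
  imports Main "HOL-Library.Extended_Nat"
begin

text \<open>A graph is given by a vertex set V, an edge set E and tail/head maps tG, hG
  (loops and multiple edges allowed).  Directed edges are pairs (e, b) with b = True
  standing for (e,+) and b = False for (e,-).\<close>

type_synonym 'e dedge = "'e \<times> bool"

definition dtail :: "('e \<Rightarrow> 'v) \<Rightarrow> ('e \<Rightarrow> 'v) \<Rightarrow> 'e dedge \<Rightarrow> 'v" where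
  "dtail tG hG u = (if snd u then tG (fst u) else hG (fst u))"

definition dhead :: "('e \<Rightarrow> 'v) \<Rightarrow> ('e \<Rightarrow> 'v) \<Rightarrow> 'e dedge \<Rightarrow> 'v" where
  "dhead tG hG u = (if snd u then hG (fst u) else tG (fst u))"

definition dinv :: "'e dedge \<Rightarrow> 'e dedge" where
  "dinv u = (fst u, \<not> snd u)"

definition is_walk :: "'e set \<Rightarrow> ('e \<Rightarrow> 'v) \<Rightarrow> ('e \<Rightarrow> 'v) \<Rightarrow> 'e dedge list \<Rightarrow> bool" where
  "is_walk E tG hG w \<longleftrightarrow> w \<noteq> [] \<and> (\<forall>u\<in>set w. fst u \<in> E) \<and>
     (\<forall>i. Suc i < length w \<longrightarrow> dhead tG hG (w ! i) = dtail tG hG (w ! Suc i))"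

definition is_closed :: "('e \<Rightarrow> 'v) \<Rightarrow> ('e \<Rightarrow> 'v) \<Rightarrow> 'e dedge list \<Rightarrow> bool" where
  "is_closed tG hG w \<longleftrightarrow> dtail tG hG (hd w) = dhead tG hG (last w)"

definition non_backtracking :: "'e dedge list \<Rightarrow> bool" where
  "non_backtracking w \<longleftrightarrow> (\<forall>i. Suc i < length w \<longrightarrow> w ! Suc i \<noteq> dinv (w ! i))"

definition balanced :: "'e dedge list \<Rightarrow> bool" where
  "balanced w \<longleftrightarrow> (\<forall>e. count_list w (e, True) = count_list w (e, False))"

definition abelian_walk :: "'e set \<Rightarrow> ('e \<Rightarrow> 'v) \<Rightarrow> ('e \<Rightarrow> 'v) \<Rightarrow> 'e dedge list \<Rightarrow> bool" where
  "abelian_walk E tG hG w \<longleftrightarrow>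
     is_walk E tG hG w \<and> is_closed tG hG w \<and> non_backtracking w \<and> balanced w"

text \<open>Abelian girth (infinity if there is no such walk, since Inf {} = \<infinity> in enat).\<close>
definition Abl :: "'e set \<Rightarrow> ('e \<Rightarrow> 'v) \<Rightarrow> ('e \<Rightarrow> 'v) \<Rightarrow> enat" where
  "Abl E tG hG = Inf {enat (length w) | w. abelian_walk E tG hG w}"

definition walk_edges :: "'e dedge list \<Rightarrow> 'e set" where
  "walk_edges w = fst ` set w"

definition walk_vertices :: "('e \<Rightarrow> 'v) \<Rightarrow> ('e \<Rightarrow> 'v) \<Rightarrow> 'e dedge list \<Rightarrow> 'v set" where
  "walk_vertices tG hG w = dtail tG hG ` set w \<union> dhead tG hG ` set w"

definition is_path :: "'e set \<Rightarrow> ('e \<Rightarrow> 'v) \<Rightarrow> ('e \<Rightarrow> 'v) \<Rightarrow> 'e dedge list \<Rightarrow> bool" where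
  "is_path E tG hG w \<longleftrightarrow> is_walk E tG hG w \<and> non_backtracking w \<and>
     dtail tG hG (hd w) \<noteq> dhead tG hG (last w) \<and> distinct (map fst w)"

definition is_cycle :: "'e set \<Rightarrow> ('e \<Rightarrow> 'v) \<Rightarrow> ('e \<Rightarrow> 'v) \<Rightarrow> 'e dedge list \<Rightarrow> bool" where
  "is_cycle E tG hG w \<longleftrightarrow> is_walk E tG hG w \<and> is_closed tG hG w \<and> non_backtracking w \<and>
     last w \<noteq> dinv (hd w) \<and> distinct (map fst w)"

definition is_subgraph :: "'v set \<Rightarrow> 'e set \<Rightarrow> ('e \<Rightarrow> 'v) \<Rightarrow> ('e \<Rightarrow> 'v) \<Rightarrow> 'v set \<Rightarrow> 'e set \<Rightarrow> bool" where
  "is_subgraph V E tG hG V' E' \<longleftrightarrow> V' \<subseteq> V \<and> E' \<subseteq> E \<and> (\<forall>e\<in>E'. tG e \<in> V' \<and> hG e \<in> V')"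

definition connected_graph :: "'v set \<Rightarrow> 'e set \<Rightarrow> ('e \<Rightarrow> 'v) \<Rightarrow> ('e \<Rightarrow> 'v) \<Rightarrow> bool" where
  "connected_graph V E tG hG \<longleftrightarrow> V \<noteq> {} \<and>
     (\<forall>u\<in>V. \<forall>v\<in>V. u = v \<or> (\<exists>w. is_walk E tG hG w \<and> dtail tG hG (hd w) = u \<and> dhead tG hG (last w) = v))"

definition euler_char :: "'v set \<Rightarrow> 'e set \<Rightarrow> int" where
  "euler_char V E = int (card V) - int (card E)"

text \<open>Degree (a loop contributes 2).\<close>
definition degree :: "'e set \<Rightarrow> ('e \<Rightarrow> 'v) \<Rightarrow> ('e \<Rightarrow> 'v) \<Rightarrow> 'v \<Rightarrow> nat" where
  "degree E tG hG v = card {e\<in>E. tG e = v} + card {e\<in>E. hG e = v}"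

definition leafless :: "'v set \<Rightarrow> 'e set \<Rightarrow> ('e \<Rightarrow> 'v) \<Rightarrow> ('e \<Rightarrow> 'v) \<Rightarrow> bool" where
  "leafless V E tG hG \<longleftrightarrow> (\<forall>v\<in>V. degree E tG hG v \<noteq> 1)"

definition barbell_decomp :: "'v set \<Rightarrow> 'e set \<Rightarrow> ('e \<Rightarrow> 'v) \<Rightarrow> ('e \<Rightarrow> 'v) \<Rightarrow>
    'e dedge list \<Rightarrow> 'e dedge list \<Rightarrow> 'e dedge list \<Rightarrow> bool" where
  "barbell_decomp V E tG hG w1 w2 b \<longleftrightarrow>
     is_cycle E tG hG w1 \<and> is_cycle E tG hG w2 \<and> is_path E tG hG b \<and>
     walk_edges w1 \<inter> walk_edges w2 = {} \<and> walk_edges w1 \<inter> walk_edges b = {} \<and>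
     walk_edges w2 \<inter> walk_edges b = {} \<and>
     dtail tG hG (hd b) = dtail tG hG (hd w1) \<and> dhead tG hG (last b) = dtail tG hG (hd w2) \<and>
     E = walk_edges w1 \<union> walk_edges w2 \<union> walk_edges b \<and>
     V = walk_vertices tG hG w1 \<union> walk_vertices tG hG w2 \<union> walk_vertices tG hG b"

definition is_barbell :: "'v set \<Rightarrow> 'e set \<Rightarrow> ('e \<Rightarrow> 'v) \<Rightarrow> ('e \<Rightarrow> 'v) \<Rightarrow> bool" where
  "is_barbell V E tG hG \<longleftrightarrow> (\<exists>w1 w2 b. barbell_decomp V E tG hG w1 w2 b)"

definition bar_edges :: "'v set \<Rightarrow> 'e set \<Rightarrow> ('e \<Rightarrow> 'v) \<Rightarrow> ('e \<Rightarrow> 'v) \<Rightarrow> 'e set" where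
  "bar_edges V E tG hG =
     (if is_barbell V E tG hG
      then walk_edges (SOME b. \<exists>w1 w2. barbell_decomp V E tG hG w1 w2 b) else {})"

definition l_Abl :: "'v set \<Rightarrow> 'e set \<Rightarrow> ('e \<Rightarrow> 'v) \<Rightarrow> ('e \<Rightarrow> 'v) \<Rightarrow> nat" where
  "l_Abl V E tG hG = (\<Sum>e\<in>E. if e \<in> bar_edges V E tG hG then 4 else 2)"

definition cel_subgraphs :: "'v set \<Rightarrow> 'e set \<Rightarrow> ('e \<Rightarrow> 'v) \<Rightarrow> ('e \<Rightarrow> 'v) \<Rightarrow> ('v set \<times> 'e set) set" where
  "cel_subgraphs V E tG hG = {(V', E'). is_subgraph V E tG hG V' E' \<and> finite V' \<and> finite E' \<and>
     connected_graph V' E' tG hG \<and> euler_char V' E' = -1 \<and> leafless V' E' tG hG}"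

end

theory Submission
  imports Defs
begin

text \<open>
  Upper bound. Growing non-backtracking walks, a CEL graph is seen to contain a simple cycle
  together with an ear or a barbell configuration; these are CEL graphs themselves, and by
  counting degrees a CEL graph has no proper CEL subgraph, so it is a theta, figure-eight or
  barbell graph. With the cycle of a theta or figure-eight graph split at the ends of the third
  path \<open>Q\<close> into \<open>A\<close> and \<open>B\<close>, the closed walk \<open>A Q\<^sup>-\<^sup>1 B\<^sup>-\<^sup>1 A\<^sup>-\<^sup>1 Q B\<close> is non-backtracking and
  uses every edge once in each direction; on a barbell with cycles \<open>w\<^sub>1, w\<^sub>2\<close> and bar \<open>b\<close>,
  the walk \<open>w\<^sub>1 b w\<^sub>2 b\<^sup>-\<^sup>1 w\<^sub>1\<^sup>-\<^sup>1 b w\<^sub>2\<^sup>-\<^sup>1 b\<^sup>-\<^sup>1\<close> does the same except that bar edges are used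
  twice in each direction.

  Lower bound. Let \<open>w\<close> be a shortest abelian walk and \<open>H\<close> the set of its edges. Every directed
  edge of \<open>H\<close> is continued inside \<open>w\<close> without backtracking, so \<open>H\<close> contains a simple cycle \<open>C\<close>.
  A non-backtracking walk confined to a simple cycle runs around it in one direction, so \<open>w\<close> is
  not confined to \<open>C\<close>, and growing a walk out of \<open>C\<close> yields an ear of \<open>C\<close>, all of whose edges
  lie on cycles, or a barbell; in the second case a shortest path joining two cycles gives a
  barbell whose bar edges are bridges of \<open>H\<close>. Every edge of \<open>H\<close> is traversed at least twice, and
  every bridge at least four times, since otherwise the part of \<open>w\<close> between its two traversals
  would be a shorter abelian walk. Summing over the edges gives \<open>l\<^sub>A\<^sub>b\<^sub>l \<le> length w\<close>.
\<close>

lemma dinv_simps[simp]: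
  "dinv (dinv d) = d" "fst (dinv d) = fst d" "dinv d \<noteq> d" "d \<noteq> dinv d"
  "dtail tG hG (dinv d) = dhead tG hG d" "dhead tG hG (dinv d) = dtail tG hG d"
  by (auto simp: dinv_def dtail_def dhead_def prod_eq_iff)

lemma dinv_eq_iff: "dinv a = b \<longleftrightarrow> a = dinv b"
  by (auto simp: dinv_def prod_eq_iff)

lemma dinv_Pair: "dinv (e, True) = (e, False)" "dinv (e, False) = (e, True)"
  by (simp_all add: dinv_def)

lemma distinct_map_nth_inj: "distinct (map f w) \<Longrightarrow> i < length w \<Longrightarrow> j < length w \<Longrightarrow>
    f (w ! i) = f (w ! j) \<Longrightarrow> i = j"
  by (metis length_map nth_eq_iff_index_eq nth_map)

lemma non_backtracking_successively:
  "non_backtracking w \<longleftrightarrow> successively (\<lambda>x y. y \<noteq> dinv x) w"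
  unfolding non_backtracking_def successively_conv_nth by blast

lemma balanced_dinv: "balanced w \<Longrightarrow> count_list w (dinv d) = count_list w d"
  unfolding balanced_def by (cases d, rename_tac e b, case_tac b) (auto simp: dinv_Pair)

locale graph =
  fixes tG hG :: "'e \<Rightarrow> 'v"
begin

section \<open>Walks\<close>

abbreviation dt where "dt \<equiv> dtail tG hG"

abbreviation dh where "dh \<equiv> dhead tG hG"

lemma dtail_cases: "dt d = tG (fst d) \<or> dt d = hG (fst d)"
  by (auto simp: dtail_def)

lemma dhead_cases: "dh d = tG (fst d) \<or> dh d = hG (fst d)"
  by (auto simp: dhead_def)

lemma ends_dedge: "{tG (fst d), hG (fst d)} = {dt d, dh d}"
  by (auto simp: dtail_def dhead_def)

lemma dtail_in: "fst d \<in> E \<Longrightarrow> \<forall>e\<in>E. tG e \<in> V \<and> hG e \<in> V \<Longrightarrow> dt d \<in> V"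
  using dtail_cases[of d] by auto

lemma dhead_in: "fst d \<in> E \<Longrightarrow> \<forall>e\<in>E. tG e \<in> V \<and> hG e \<in> V \<Longrightarrow> dh d \<in> V"
  using dhead_cases[of d] by auto

definition linked :: "'e dedge list \<Rightarrow> bool" where
  "linked w \<longleftrightarrow> successively (\<lambda>x y. dh x = dt y) w"

abbreviation walk :: "'e set \<Rightarrow> 'e dedge list \<Rightarrow> bool" where
  "walk S \<equiv> is_walk S tG hG"

lemma walk_iff: "walk S w \<longleftrightarrow> w \<noteq> [] \<and> fst ` set w \<subseteq> S \<and> linked w"
  unfolding is_walk_def linked_def successively_conv_nth by blast

definition verts :: "'e dedge list \<Rightarrow> 'v set" where
  "verts c = dt ` set c"

abbreviation edges :: "'e dedge list \<Rightarrow> 'e set" where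
  "edges c \<equiv> fst ` set c"

lemma linked_simps[simp]:
  "linked []" "linked [x]" "linked (x # y # xs) \<longleftrightarrow> dh x = dt y \<and> linked (y # xs)"
  by (auto simp: linked_def)

lemma non_backtracking_simps[simp]:
  "non_backtracking []" "non_backtracking [x]" "non_backtracking (x # y # xs) \<longleftrightarrow> y \<noteq> dinv x \<and> non_backtracking (y # xs)"
  by (auto simp: non_backtracking_successively)

lemma linked_append: "linked (xs @ ys) \<longleftrightarrow> linked xs \<and> linked ys \<and>
    (xs = [] \<or> ys = [] \<or> dh (last xs) = dt (hd ys))"
  by (simp add: linked_def successively_append_iff)

lemma non_backtracking_append: "non_backtracking (xs @ ys) \<longleftrightarrow> non_backtracking xs \<and> non_backtracking ys \<and>
    (xs = [] \<or> ys = [] \<or> hd ys \<noteq> dinv (last xs))"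
  by (simp add: non_backtracking_successively successively_append_iff)

lemma linked_Cons: "linked (x # xs) \<longleftrightarrow> linked xs \<and> (xs = [] \<or> dh x = dt (hd xs))"
  by (cases xs) auto

lemma non_backtracking_Cons: "non_backtracking (x # xs) \<longleftrightarrow> non_backtracking xs \<and> (xs = [] \<or> hd xs \<noteq> dinv x)"
  by (cases xs) auto

lemma linked_take: "linked w \<Longrightarrow> linked (take n w)"
  by (metis append_take_drop_id linked_append)

lemma linked_drop: "linked w \<Longrightarrow> linked (drop n w)"
  by (metis append_take_drop_id linked_append)

lemma non_backtracking_take: "non_backtracking w \<Longrightarrow> non_backtracking (take n w)"
  by (metis append_take_drop_id non_backtracking_append)

lemma non_backtracking_drop: "non_backtracking w \<Longrightarrow> non_backtracking (drop n w)"
  by (metis append_take_drop_id non_backtracking_append)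

lemma linked_nth: "linked w \<Longrightarrow> Suc i < length w \<Longrightarrow> dh (w ! i) = dt (w ! Suc i)"
  unfolding linked_def by (rule successively_nth)

lemma non_backtracking_nth: "non_backtracking w \<Longrightarrow> Suc i < length w \<Longrightarrow> w ! Suc i \<noteq> dinv (w ! i)"
  unfolding non_backtracking_successively by (rule successively_nth)

lemma linked_dh_nth:
  assumes "linked P" "i < length P"
  shows "dh (P ! i) = (if Suc i < length P then dt (P ! Suc i) else dh (last P))"
proof (cases "Suc i < length P")
  case False
  then have "i = length P - 1" "P \<noteq> []" using assms by auto
  then show ?thesis using False by (simp add: last_conv_nth)
qed (use linked_nth[OF assms(1), of i] in simp)

definition rev_walk :: "'e dedge list \<Rightarrow> 'e dedge list" where
  "rev_walk w = rev (map dinv w)"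

lemma rev_walk_simps[simp]: "rev_walk [] = []" "rev_walk (rev_walk w) = w" "length (rev_walk w) = length w"
  "rev_walk (xs @ ys) = rev_walk ys @ rev_walk xs" "rev_walk [x] = [dinv x]" "rev_walk w = [] \<longleftrightarrow> w = []"
  "fst ` set (rev_walk w) = fst ` set w"
  by (auto simp: rev_walk_def rev_map[symmetric] comp_def image_image)

lemma hd_last_rev_walk: "w \<noteq> [] \<Longrightarrow> hd (rev_walk w) = dinv (last w)"
  "w \<noteq> [] \<Longrightarrow> last (rev_walk w) = dinv (hd w)"
  by (auto simp: rev_walk_def hd_rev last_rev hd_map last_map)

lemma linked_rev_walk[simp]: "linked (rev_walk w) \<longleftrightarrow> linked w"
  unfolding rev_walk_def linked_def by (simp add: successively_map eq_commute)

lemma non_backtracking_rev_walk[simp]: "non_backtracking (rev_walk w) \<longleftrightarrow> non_backtracking w"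
  unfolding rev_walk_def non_backtracking_successively
  by (simp add: successively_map) (rule successively_cong, auto simp: dinv_eq_iff)

lemma count_list_rev_walk: "count_list (rev_walk w) d = count_list w (dinv d)"
proof (induction w)
  case (Cons a w)
  then show ?case by (auto simp: rev_walk_def count_list_append dinv_eq_iff)
qed (simp add: rev_walk_def)

lemma walk_rev_walk[simp]: "walk S (rev_walk w) \<longleftrightarrow> walk S w"
  by (simp add: walk_iff)

lemma walk_append: "walk S X \<Longrightarrow> walk S Y \<Longrightarrow> dh (last X) = dt (hd Y) \<Longrightarrow> walk S (X @ Y)"
  by (auto simp: walk_iff linked_append)

abbreviation closed :: "'e dedge list \<Rightarrow> bool" where
  "closed \<equiv> is_closed tG hG"

lemma closed_iff: "closed w \<longleftrightarrow> dh (last w) = dt (hd w)"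
  by (auto simp: is_closed_def)

lemma linked_closed_swap:
  assumes "linked (xs @ ys)" "closed (xs @ ys)"
  shows "linked (ys @ xs)" "closed (ys @ xs)"
  using assms by (cases "xs = [] \<or> ys = []"; auto simp: linked_append closed_iff)+

definition cyclically_non_backtracking :: "'e dedge list \<Rightarrow> bool" where
  "cyclically_non_backtracking w \<longleftrightarrow> non_backtracking w \<and> last w \<noteq> dinv (hd w)"

lemma cyclically_non_backtracking_swap:
  assumes "cyclically_non_backtracking (xs @ ys)"
  shows "cyclically_non_backtracking (ys @ xs)"
  using assms
  by (cases "xs = [] \<or> ys = []") (auto simp: cyclically_non_backtracking_def non_backtracking_append dinv_eq_iff)

lemma fst_eq_dedge_cases: "fst a = fst b \<Longrightarrow> a = b \<or> a = dinv b"
  by (cases a; cases b) (auto simp: dinv_def)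

lemma distinct_edges_if_distinct_tails:
  assumes "linked w" "non_backtracking w" "distinct (map dt w)"
  shows "distinct (map fst w)"
proof -
  have "fst (w ! i) \<noteq> fst (w ! j)" if "i < j" "j < length w" for i j
  proof
    assume eq: "fst (w ! i) = fst (w ! j)"
    have ij: "i \<noteq> j" "i < length w" using that by auto
    from fst_eq_dedge_cases[OF eq] show False
    proof
      assume "w ! i = w ! j"
      then have "dt (w ! i) = dt (w ! j)" by simp
      then show False using assms(3) ij that distinct_map_nth_inj[of dt w i j] by simp
    next
      assume a: "w ! i = dinv (w ! j)"
      then have "dt (w ! j) = dh (w ! i)" by simp
      also have "\<dots> = dt (w ! Suc i)" using linked_nth[OF assms(1), of i] that by simp
      finally have "j = Suc i" using assms(3) that distinct_map_nth_inj[of dt w j "Suc i"] by simp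
      then show False using non_backtracking_nth[OF assms(2), of i] a that by auto
    qed
  qed
  then show ?thesis by (auto simp: distinct_conv_nth) (metis linorder_neqE_nat)
qed

lemma closed_heads_eq_tails:
  assumes "linked w" "closed w" "w \<noteq> []"
  shows "dh ` set w = dt ` set w"
proof -
  have "dh (w ! i) \<in> dt ` set w" if "i < length w" for i
  proof (cases "Suc i < length w")
    case True then show ?thesis using linked_nth[OF assms(1) True] by auto
  next
    case False
    then have "i = length w - 1" using that by simp
    then have "w ! i = last w" using assms(3) by (simp add: last_conv_nth)
    then show ?thesis using assms by (auto simp: closed_iff)
  qed
  moreover have "dt (w ! i) \<in> dh ` set w" if "i < length w" for i
  proof (cases i)
    case (Suc j)
    then have "dt (w ! i) = dh (w ! j)" "j < length w" using linked_nth[OF assms(1), of j] that by auto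
    then show ?thesis by auto
  next
    case 0
    then have "w ! i = hd w" using assms by (simp add: hd_conv_nth)
    have "dh (last w) \<in> dh ` set w" using assms(3) by simp
    moreover have "dt (w ! i) = dh (last w)" using assms \<open>w ! i = hd w\<close> by (simp add: closed_iff)
    ultimately show ?thesis by simp
  qed
  ultimately show ?thesis
    by (auto simp: in_set_conv_nth image_iff) (metis in_set_conv_nth)+
qed

lemma dtail_set_tl: "dt ` set (tl P) = {dt (P ! i) |i. 0 < i \<and> i < length P}"
proof -
  have "set (tl P) = {P ! i |i. 0 < i \<and> i < length P}"
  proof (cases P)
    case (Cons x xs)
    have "{(x # xs) ! i |i. 0 < i \<and> i < length (x # xs)} = {xs ! j |j. j < length xs}"
    proof (intro set_eqI iffI)
      fix y assume "y \<in> {(x # xs) ! i |i. 0 < i \<and> i < length (x # xs)}"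
      then obtain i where "0 < i" "i < length (x # xs)" "y = (x # xs) ! i" by blast
      then show "y \<in> {xs ! j |j. j < length xs}"
        by (intro CollectI exI[of _ "i - 1"]) (cases i, auto)
    next
      fix y assume "y \<in> {xs ! j |j. j < length xs}"
      then obtain j where "j < length xs" "y = xs ! j" by blast
      then show "y \<in> {(x # xs) ! i |i. 0 < i \<and> i < length (x # xs)}"
        by (intro CollectI exI[of _ "Suc j"]) auto
    qed
    then show ?thesis unfolding Cons by (simp add: set_conv_nth)
  qed simp
  then show ?thesis by auto
qed

lemma dhead_in_tails_or_last:
  assumes "linked P" "d \<in> set P"
  shows "dh d = dh (last P) \<or> dh d \<in> dt ` set (tl P)"
proof -
  obtain i where i: "i < length P" "P ! i = d" using assms(2) by (meson in_set_conv_nth)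
  show ?thesis using linked_dh_nth[OF assms(1) i(1)] i dtail_set_tl[of P] by auto
qed

lemma dtail_set_hd_tl: "P \<noteq> [] \<Longrightarrow> dt ` set P = insert (dt (hd P)) (dt ` set (tl P))"
  by (cases P) auto

lemma card_dtail_set_tl: "distinct (map dt P) \<Longrightarrow> card (dt ` set (tl P)) = length P - 1"
proof -
  assume "distinct (map dt P)"
  then have "distinct (map dt (tl P))" by (cases P) auto
  then show ?thesis using distinct_card by (metis length_map length_tl set_map)
qed

lemma tG_in_walk_ends:
  "d \<in> set X \<Longrightarrow> tG (fst d) \<in> dt ` set X \<union> dh ` set X"
proof -
  assume d: "d \<in> set X"
  have "tG (fst d) \<in> {dt d, dh d}" using ends_dedge[of d] by blast
  then show ?thesis using d by blast
qed

lemma closed_edge_ends: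
  assumes "linked c" "closed c" "c \<noteq> []" "e \<in> edges c"
  shows "tG e \<in> dt ` set c" "hG e \<in> dt ` set c"
proof -
  obtain d where d: "d \<in> set c" "fst d = e" using assms(4) by auto
  have "dt d \<in> dt ` set c" "dh d \<in> dt ` set c" using d closed_heads_eq_tails[OF assms(1-3)] by auto
  moreover have "tG e \<in> {dt d, dh d}" "hG e \<in> {dt d, dh d}" using ends_dedge[of d] d by auto
  ultimately show "tG e \<in> dt ` set c" "hG e \<in> dt ` set c" by auto
qed

definition vertex_seq :: "'e dedge list \<Rightarrow> 'v list" where
  "vertex_seq p = map dt p @ [dh (last p)]"

lemma length_vertex_seq: "length (vertex_seq p) = Suc (length p)" by (simp add: vertex_seq_def)

lemma vertex_seq_nth: "i < length p \<Longrightarrow> vertex_seq p ! i = dt (p ! i)"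
  by (simp add: vertex_seq_def nth_append)

lemma vertex_seq_last: "vertex_seq p ! length p = dh (last p)"
  by (simp add: vertex_seq_def nth_append)

lemma dhead_vertex_seq: "linked p \<Longrightarrow> i < length p \<Longrightarrow> dh (p ! i) = vertex_seq p ! Suc i"
proof -
  assume a: "linked p" "i < length p"
  show ?thesis
  proof (cases "Suc i < length p")
    case True then show ?thesis using linked_dh_nth[OF a] vertex_seq_nth[of "Suc i" p] by simp
  next
    case False
    then have "Suc i = length p" using a by simp
    then show ?thesis using linked_dh_nth[OF a] vertex_seq_last[of p] by simp
  qed
qed

lemma set_vertex_seq: "p \<noteq> [] \<Longrightarrow> linked p \<Longrightarrow> set (vertex_seq p) = dt ` set p \<union> dh ` set p"
proof -
  assume a: "p \<noteq> []" "linked p"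
  have "dh ` set p \<subseteq> set (vertex_seq p)"
    using dhead_in_tails_or_last[OF a(2)] by (auto simp: vertex_seq_def dest: list.set_sel(2)[OF a(1)])
  moreover have "dh (last p) \<in> dh ` set p" using a(1) by simp
  ultimately show ?thesis by (auto simp: vertex_seq_def)
qed

lemma non_backtracking_if_distinct_tails:
  assumes "linked p" "distinct (map dt p)" "dh (last p) \<notin> dt ` set p"
  shows "non_backtracking p"
  unfolding non_backtracking_def
proof (intro allI impI notI)
  fix i assume i: "Suc i < length p" and eq: "p ! Suc i = dinv (p ! i)"
  have h: "dh (p ! Suc i) = dt (p ! i)" using eq by simp
  show False
  proof (cases "Suc (Suc i) < length p")
    case True
    then have "dt (p ! Suc (Suc i)) = dt (p ! i)" using linked_nth[OF assms(1) True] h by simp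
    then show False using distinct_map_nth_inj[OF assms(2) True, of i] i by simp
  next
    case False
    then have "p ! Suc i = last p" using i by (metis Suc_lessI last_conv_nth list.size(3) not_less_zero diff_Suc_1)
    then have "dh (last p) = dt (p ! i)" using h by simp
    then show False using assms(3) i by (metis Suc_lessD image_eqI nth_mem)
  qed
qed

lemma walk_take:
  assumes "walk S p" "0 < i" "i < length p"
  shows "walk S (take i p)" "dt (hd (take i p)) = dt (hd p)" "dh (last (take i p)) = dt (p ! i)"
    "length (take i p) = i"
proof -
  have ch: "linked p" "p \<noteq> []" using assms(1) by (auto simp: walk_iff)
  have tn: "take i p \<noteq> []" using assms by auto
  show "walk S (take i p)" using assms(1) tn linked_take[OF ch(1)] by (auto simp: walk_iff dest: in_set_takeD)
  show "dt (hd (take i p)) = dt (hd p)" using assms ch by simp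
  have "last (take i p) = take i p ! (i - 1)" using tn assms by (simp add: last_conv_nth min_def)
  also have "\<dots> = p ! (i - 1)" using assms by simp
  finally show "dh (last (take i p)) = dt (p ! i)" using linked_nth[OF ch(1), of "i - 1"] assms by simp
  show "length (take i p) = i" using assms by simp
qed

lemma walk_drop:
  assumes "walk S p" "i < length p"
  shows "walk S (drop i p)" "dt (hd (drop i p)) = dt (p ! i)" "dh (last (drop i p)) = dh (last p)"
    "length (drop i p) = length p - i"
proof -
  have ch: "linked p" using assms(1) by (auto simp: walk_iff)
  have dn: "drop i p \<noteq> []" using assms by auto
  show "walk S (drop i p)" using assms(1) dn linked_drop[OF ch] by (auto simp: walk_iff dest: in_set_dropD)
  show "dt (hd (drop i p)) = dt (p ! i)" using assms by (simp add: hd_drop_conv_nth)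
  show "dh (last (drop i p)) = dh (last p)" using assms by simp
  show "length (drop i p) = length p - i" by simp
qed

lemma walk_shortcut:
  assumes "walk S p" "i < j" "j < length p" "dt (p ! i) = dt (p ! j)"
  shows "\<exists>p'. walk S p' \<and> dt (hd p') = dt (hd p) \<and> dh (last p') = dh (last p) \<and> length p' < length p"
proof (cases "i = 0")
  case True
  have "p \<noteq> []" using assms by auto
  then have "dt (hd p) = dt (p ! 0)" by (simp add: hd_conv_nth)
  then show ?thesis using walk_drop[OF assms(1,3)] assms True by (intro exI[of _ "drop j p"]) auto
next
  case False
  have ip: "0 < i" "i < length p" using False assms by auto
  note t = walk_take[OF assms(1) ip] and d = walk_drop[OF assms(1,3)]
  have "walk S (take i p @ drop j p)" using t d False assms by (intro walk_append) auto
  moreover have "dt (hd (take i p @ drop j p)) = dt (hd p)"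
  proof -
    have tn: "take i p \<noteq> []" using ip by auto
    then have "hd (take i p @ drop j p) = hd (take i p)" by simp
    then show ?thesis using t(2) by simp
  qed
  moreover have "dh (last (take i p @ drop j p)) = dh (last p)" using d assms by simp
  moreover have "length (take i p @ drop j p) < length p" using assms False by simp
  ultimately show ?thesis by blast
qed

definition traversals :: "'e dedge list \<Rightarrow> 'e \<Rightarrow> nat" where
  "traversals w e = count_list w (e, True) + count_list w (e, False)"

lemma length_eq_sum_traversals:
  assumes "finite A" "fst ` set w \<subseteq> A"
  shows "length w = (\<Sum>e\<in>A. traversals w e)"
  using assms(2)
proof (induction w)
  case Nil
  then show ?case by (simp add: traversals_def)
next
  case (Cons a w)
  have "(\<Sum>e\<in>A. traversals (a # w) e) = (\<Sum>e\<in>A. traversals w e + (if e = fst a then 1 else 0))"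
  proof (intro sum.cong refl)
    fix e
    obtain x b where a: "a = (x, b)" by (cases a)
    show "traversals (a # w) e = traversals w e + (if e = fst a then 1 else 0)"
      unfolding a traversals_def by (cases b) auto
  qed
  also have "\<dots> = (\<Sum>e\<in>A. traversals w e) + 1"
    using Cons.prems assms(1) by (simp add: sum.distrib)
  finally show ?case using Cons by simp
qed

section \<open>Reachability\<close>

definition adj :: "'e set \<Rightarrow> ('v \<times> 'v) set" where
  "adj S = {(tG e, hG e) |e. e \<in> S} \<union> {(hG e, tG e) |e. e \<in> S}"

definition reach :: "'e set \<Rightarrow> 'v \<Rightarrow> 'v \<Rightarrow> bool" where
  "reach S a b \<longleftrightarrow> (a, b) \<in> (adj S)\<^sup>*"

lemma reach_refl[simp]: "reach S a a" by (simp add: reach_def)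

lemma reach_trans: "reach S a b \<Longrightarrow> reach S b c \<Longrightarrow> reach S a c"
  by (simp add: reach_def)

lemma adj_sym: "(a, b) \<in> adj S \<Longrightarrow> (b, a) \<in> adj S"
  by (auto simp: adj_def)

lemma reach_sym: "reach S a b \<Longrightarrow> reach S b a"
  unfolding reach_def
proof (induction rule: rtrancl_induct)
  case (step y z)
  then show ?case by (meson adj_sym converse_rtrancl_into_rtrancl)
qed simp

lemma reach_dedge_ends: "fst d \<in> S \<Longrightarrow> reach S (dt d) (dh d)"
  unfolding reach_def adj_def dtail_def dhead_def by (auto intro!: r_into_rtrancl)

lemma reach_along_linked:
  assumes "linked w" "fst ` set w \<subseteq> S" "w \<noteq> []"
  shows "\<forall>d\<in>set w. reach S (dt (hd w)) (dt d) \<and> reach S (dt (hd w)) (dh d)"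
  using assms
proof (induction w)
  case (Cons a w)
  show ?case
  proof (cases "w = []")
    case True then show ?thesis using Cons.prems reach_dedge_ends[of a S] by auto
  next
    case False
    then have IH: "\<forall>d\<in>set w. reach S (dt (hd w)) (dt d) \<and> reach S (dt (hd w)) (dh d)"
      using Cons by (auto simp: linked_Cons)
    have "reach S (dt a) (dt (hd w))" using Cons.prems False reach_dedge_ends[of a S]
      by (auto simp: linked_Cons)
    then show ?thesis using IH reach_dedge_ends[of a S] Cons.prems by (auto intro: reach_trans)
  qed
qed simp

lemma reach_within_walk:
  assumes "walk S w" "x \<in> dt ` set w \<union> dh ` set w" "y \<in> dt ` set w \<union> dh ` set w"
  shows "reach S x y"
proof -
  have "reach S (dt (hd w)) x" "reach S (dt (hd w)) y"
    using reach_along_linked[of w S] assms by (auto simp: walk_iff)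
  then show ?thesis by (meson reach_sym reach_trans)
qed

lemma walk_if_reach:
  assumes "reach S a b" "a \<noteq> b"
  shows "\<exists>w. walk S w \<and> dt (hd w) = a \<and> dh (last w) = b"
proof -
  have "a = b \<or> (\<exists>w. walk S w \<and> dt (hd w) = a \<and> dh (last w) = b)"
    using assms(1) unfolding reach_def
  proof (induction rule: rtrancl_induct)
    case (step y z)
    obtain d where d: "fst d \<in> S" "dt d = y" "dh d = z"
      using step(2) unfolding adj_def
      by (auto simp: dtail_def dhead_def) (metis fst_conv snd_conv)+
    from step(3) show ?case
    proof
      assume "a = y"
      then show ?thesis using d by (intro disjI2 exI[of _ "[d]"]) (auto simp: walk_iff)
    next
      assume "\<exists>w. walk S w \<and> dt (hd w) = a \<and> dh (last w) = y"
      then obtain w where "walk S w" "dt (hd w) = a" "dh (last w) = y" by blast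
      then show ?thesis using d
        by (intro disjI2 exI[of _ "w @ [d]"]) (auto simp: walk_iff linked_append)
    qed
  qed simp
  with assms show ?thesis by blast
qed

lemma shortest_path:
  assumes "reach S a b" "a \<noteq> b"
  shows "\<exists>p. walk S p \<and> dt (hd p) = a \<and> dh (last p) = b \<and> distinct (map dt p) \<and>
    b \<notin> dt ` set p \<and> non_backtracking p"
proof -
  define Q where "Q n \<longleftrightarrow> (\<exists>p. walk S p \<and> dt (hd p) = a \<and> dh (last p) = b \<and> length p = n)" for n
  have "\<exists>n. Q n" using walk_if_reach[OF assms] by (auto simp: Q_def)
  define n where "n = (LEAST n. Q n)"
  have Qn: "Q n" unfolding n_def using \<open>\<exists>n. Q n\<close> by (rule LeastI_ex)
  have min: "\<And>p. walk S p \<Longrightarrow> dt (hd p) = a \<Longrightarrow> dh (last p) = b \<Longrightarrow> n \<le> length p"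
    unfolding n_def by (rule Least_le) (auto simp: Q_def)
  obtain p where p: "walk S p" "dt (hd p) = a" "dh (last p) = b" "length p = n" using Qn by (auto simp: Q_def)
  have ch: "linked p" "p \<noteq> []" using p(1) by (auto simp: walk_iff)
  have d: "distinct (map dt p)"
  proof (rule ccontr)
    assume "\<not> distinct (map dt p)"
    then obtain i j where ij: "i < j" "j < length p" "dt (p ! i) = dt (p ! j)"
      by (auto simp: distinct_conv_nth) (metis linorder_neqE_nat)
    obtain p' where "walk S p'" "dt (hd p') = dt (hd p)" "dh (last p') = dh (last p)" "length p' < length p"
      using walk_shortcut[OF p(1) ij] by blast
    then show False using min p by fastforce
  qed
  have b_off: "b \<notin> dt ` set p"
  proof
    assume "b \<in> dt ` set p"
    then obtain i where i: "i < length p" "dt (p ! i) = b" by (auto simp: in_set_conv_nth)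
    show False
    proof (cases "i = 0")
      case True then show False using i p(2) assms(2) ch by (simp add: hd_conv_nth)
    next
      case False
      note t = walk_take[OF p(1) _ i(1)]
      then show False using False min[of "take i p"] i p by auto
    qed
  qed
  show ?thesis using p d b_off non_backtracking_if_distinct_tails[OF ch(1) d] p(3) by auto
qed

lemma crossing_edge:
  assumes "reach S a b" "a \<in> A" "b \<notin> A"
  shows "\<exists>e\<in>S. (tG e \<in> A \<and> hG e \<notin> A) \<or> (hG e \<in> A \<and> tG e \<notin> A)"
proof -
  have "b \<notin> A \<longrightarrow> (\<exists>e\<in>S. (tG e \<in> A \<and> hG e \<notin> A) \<or> (hG e \<in> A \<and> tG e \<notin> A))"
    using assms(1) unfolding reach_def
  proof (induction rule: rtrancl_induct)
    case base then show ?case using assms(2) by simp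
  next
    case (step y z)
    show ?case
    proof (cases "y \<in> A")
      case True
      from step(2) obtain e where "e \<in> S" "(y, z) = (tG e, hG e) \<or> (y, z) = (hG e, tG e)"
        unfolding adj_def by blast
      then show ?thesis using True by auto
    next
      case False then show ?thesis using step(3) by simp
    qed
  qed
  then show ?thesis using assms(3) by simp
qed

lemma reach_if_connected:
  assumes "connected_graph V E tG hG" "u \<in> V" "v \<in> V"
  shows "reach E u v"
proof -
  from assms have "u = v \<or> (\<exists>w. walk E w \<and> dt (hd w) = u \<and> dh (last w) = v)"
    by (auto simp: connected_graph_def)
  then show ?thesis
  proof
    assume "\<exists>w. walk E w \<and> dt (hd w) = u \<and> dh (last w) = v"
    then obtain w where w: "walk E w" "dt (hd w) = u" "dh (last w) = v" by blast
    have "w \<noteq> []" using w(1) by (simp add: walk_iff)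
    then show ?thesis using reach_within_walk[OF w(1), of u v] w by auto
  qed simp
qed

lemma reach_stays_in:
  assumes "reach S a c" "a \<in> A" "\<forall>e\<in>S. (tG e \<in> A \<longleftrightarrow> hG e \<in> A)"
  shows "c \<in> A"
  using crossing_edge[OF assms(1,2)] assms(3) by blast

lemma not_reach_across_cut:
  assumes "\<forall>e\<in>S. (tG e \<in> A \<longleftrightarrow> hG e \<in> A)" "dt d \<in> A" "dh d \<notin> A"
  shows "\<not> reach S (tG (fst d)) (hG (fst d))"
proof
  assume r: "reach S (tG (fst d)) (hG (fst d))"
  show False
  proof (cases "snd d")
    case True
    then show False using reach_stays_in[OF r _ assms(1)] assms(2,3) by (simp add: dtail_def dhead_def)
  next
    case False
    then show False using reach_stays_in[OF reach_sym[OF r] _ assms(1)] assms(2,3)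
      by (simp add: dtail_def dhead_def)
  qed
qed

lemma connected_graphI:
  assumes "r \<in> V0" "\<And>x. x \<in> V0 \<Longrightarrow> reach E0 r x"
  shows "connected_graph V0 E0 tG hG"
  unfolding connected_graph_def
proof (intro conjI ballI)
  show "V0 \<noteq> {}" using assms(1) by blast
  fix u v assume "u \<in> V0" "v \<in> V0"
  then have "reach E0 u v" using assms(2) reach_sym reach_trans by meson
  then show "u = v \<or> (\<exists>w. is_walk E0 tG hG w \<and> dt (hd w) = u \<and> dh (last w) = v)"
    using walk_if_reach[of E0 u v] by auto
qed

section \<open>Simple cycles\<close>

definition simple_cycle :: "'e set \<Rightarrow> 'e dedge list \<Rightarrow> bool" where
  "simple_cycle S c \<longleftrightarrow> walk S c \<and> closed c \<and> cyclically_non_backtracking c \<and> distinct (map dt c)"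

lemma simple_cycleD:
  assumes "simple_cycle S c"
  shows "c \<noteq> []" "linked c" "non_backtracking c" "closed c" "distinct (map fst c)" "edges c \<subseteq> S"
    "dh ` set c = verts c" "card (verts c) = length c" "card (edges c) = length c"
    "last c \<noteq> dinv (hd c)"
proof -
  have w: "walk S c" "closed c" "cyclically_non_backtracking c" "distinct (map dt c)" using assms by (auto simp: simple_cycle_def)
  show c: "c \<noteq> []" "linked c" "non_backtracking c" "closed c" "edges c \<subseteq> S" "last c \<noteq> dinv (hd c)"
    using w by (auto simp: walk_iff cyclically_non_backtracking_def)
  show "distinct (map fst c)" using distinct_edges_if_distinct_tails[of c] c w by blast
  show "dh ` set c = verts c" using closed_heads_eq_tails[of c] c by (simp add: verts_def)
  show "card (verts c) = length c" using distinct_card[OF w(4)] by (simp add: verts_def)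
  show "card (edges c) = length c" using distinct_card[OF \<open>distinct (map fst c)\<close>] by simp
qed

lemma simple_cycle_edge_ends:
  assumes "simple_cycle S c" "e \<in> edges c"
  shows "tG e \<in> verts c" "hG e \<in> verts c"
proof -
  obtain d where d: "d \<in> set c" "fst d = e" using assms by auto
  have "dt d \<in> verts c" "dh d \<in> verts c" using d simple_cycleD(7)[OF assms(1)]
    by (auto simp: verts_def)
  moreover have "tG (fst d) \<in> {dt d, dh d}" "hG (fst d) \<in> {dt d, dh d}"
    using ends_dedge[of d] by blast+
  ultimately show "tG e \<in> verts c" "hG e \<in> verts c" using d by auto
qed

lemma simple_cycle_swap:
  assumes "simple_cycle S (xs @ ys)"
  shows "simple_cycle S (ys @ xs)"
  using assms linked_closed_swap[of xs ys] cyclically_non_backtracking_swap[of xs ys]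
  by (auto simp: simple_cycle_def walk_iff)

lemma simple_cycle_start_at_dedge:
  assumes "simple_cycle S c" "d \<in> set c"
  shows "\<exists>c'. simple_cycle S c' \<and> set c' = set c \<and> hd c' = d \<and> length c' = length c"
proof -
  obtain xs ys where "c = xs @ d # ys" using split_list[OF assms(2)] by blast
  then show ?thesis using simple_cycle_swap[of S xs "d # ys"] assms(1)
    by (intro exI[of _ "(d # ys) @ xs"]) auto
qed

lemma simple_cycle_start_at:
  assumes "simple_cycle S c" "v \<in> verts c"
  shows "\<exists>c'. simple_cycle S c' \<and> set c' = set c \<and> verts c' = verts c \<and> dt (hd c') = v \<and> length c' = length c"
proof -
  obtain d where "d \<in> set c" "dt d = v" using assms(2) by (auto simp: verts_def)
  then show ?thesis using simple_cycle_start_at_dedge[OF assms(1)] by (metis verts_def)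
qed

lemma is_cycle_if_simple_cycle: "simple_cycle S c \<Longrightarrow> is_cycle S tG hG c"
  unfolding is_cycle_def using simple_cycleD[of S c]
  by (simp add: simple_cycle_def closed_iff)

lemma simple_cycle_split:
  assumes "simple_cycle S c" "a \<in> verts c" "b \<in> verts c" "a \<noteq> b"
  obtains A B where "simple_cycle S (A @ B)" "set (A @ B) = set c" "length (A @ B) = length c"
    "A \<noteq> []" "B \<noteq> []" "dt (hd A) = a" "dh (last A) = b" "dt (hd B) = b" "dh (last B) = a"
proof -
  obtain c' where c': "simple_cycle S c'" "set c' = set c" "verts c' = verts c" "dt (hd c') = a"
    "length c' = length c"
    using simple_cycle_start_at[OF assms(1,2)] by blast
  have "b \<in> dt ` set c'" using assms(3) c'(3) by (simp add: verts_def)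
  then obtain d where d: "d \<in> set c'" "dt d = b" by blast
  obtain A B where AB: "c' = A @ d # B" using split_list[OF d(1)] by blast
  have "A \<noteq> []" using AB c'(4) d(2) assms(4) by auto
  moreover have "linked c'" "closed c'" using c'(1) by (auto simp: simple_cycle_def walk_iff)
  ultimately show thesis using that[of A "d # B"] c' AB d(2)
    by (auto simp: linked_append closed_iff)
qed

lemma last_ne_dinv_hd:
  assumes "linked c" "non_backtracking c" "distinct (map dt c)" "c \<noteq> []"
  shows "last c \<noteq> dinv (hd c)"
proof
  assume eq: "last c = dinv (hd c)"
  show False
  proof (cases "length c = 1")
    case True
    then have "last c = hd c" by (cases c) auto
    then show False using eq by simp
  next
    case False
    then have l: "1 < length c" using assms(4) by (cases c) auto
    have "hd c = c ! 0" "last c = c ! (length c - 1)" using assms(4) by (simp_all add: hd_conv_nth last_conv_nth)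
    have "dt (last c) = dh (hd c)" using eq by simp
    then have "dt (c ! (length c - 1)) = dh (c ! 0)"
      using \<open>hd c = c ! 0\<close> \<open>last c = c ! (length c - 1)\<close> by simp
    also have "\<dots> = dt (c ! 1)" using linked_nth[OF assms(1), of 0] l by simp
    finally have "length c - 1 = 1" using distinct_map_nth_inj[OF assms(3), of "length c - 1" 1] l by simp
    then have "c ! 1 = dinv (c ! 0)" using eq \<open>hd c = c ! 0\<close> \<open>last c = c ! (length c - 1)\<close> by simp
    then show False using non_backtracking_nth[OF assms(2), of 0] l by simp
  qed
qed

lemma simple_cycleI:
  assumes "walk S c" "closed c" "non_backtracking c" "distinct (map dt c)"
  shows "simple_cycle S c"
  using assms last_ne_dinv_hd[of c] by (simp add: simple_cycle_def cyclically_non_backtracking_def walk_iff)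

lemma simple_cycle_drop:
  assumes "walk S ws" "non_backtracking ws" "distinct (map dt ws)" "j < length ws" "dh (last ws) = dt (ws ! j)"
  shows "simple_cycle S (drop j ws)"
proof (rule simple_cycleI)
  have ne: "drop j ws \<noteq> []" using assms(4) by simp
  show "walk S (drop j ws)" using assms(1) ne linked_drop[of ws j]
    by (auto simp: walk_iff dest: in_set_dropD)
  show "closed (drop j ws)" using assms(4,5) ne by (simp add: closed_iff hd_drop_conv_nth)
  show "non_backtracking (drop j ws)" using non_backtracking_drop[OF assms(2)] .
  show "distinct (map dt (drop j ws))" using assms(3) by (simp add: drop_map[symmetric] distinct_drop)
qed

lemma closed_trail_nonbridge:
  assumes "walk S c" "closed c" "distinct (map fst c)" "d \<in> set c"
  shows "reach (S - {fst d}) (tG (fst d)) (hG (fst d))"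
proof -
  obtain xs ys where c: "c = xs @ d # ys" using split_list[OF assms(4)] by blast
  let ?r = "ys @ xs"
  have "linked ((d # ys) @ xs)" "closed ((d # ys) @ xs)"
    using linked_closed_swap[of xs "d # ys"] assms(1,2) c by (auto simp: walk_iff)
  then have lk: "linked (d # ?r)" "closed (d # ?r)" by simp_all
  have r: "reach (S - {fst d}) (dh d) (dt d)"
  proof (cases "?r = []")
    case True
    then show ?thesis using lk(2) by (simp add: closed_iff)
  next
    case False
    have "fst d \<notin> edges ?r" "edges ?r \<subseteq> S" using assms(1,3) c by (auto simp: walk_iff)
    then have "fst ` set ?r \<subseteq> S - {fst d}" by blast
    then have w: "walk (S - {fst d}) ?r" using lk(1) False by (simp add: walk_iff linked_Cons)
    have "dt (hd ?r) = dh d" "dh (last ?r) = dt d"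
      using lk False by (auto simp: linked_Cons closed_iff split: if_splits)
    then show ?thesis using reach_within_walk[OF w, of "dh d" "dt d"] False
      by (metis UnI1 UnI2 hd_in_set last_in_set image_eqI)
  qed
  then show ?thesis using reach_sym[of "S - {fst d}"]
    by (cases "snd d") (auto simp: dtail_def dhead_def)
qed

lemma simple_cycle_nonbridge:
  assumes "simple_cycle S c" "edges c \<subseteq> E0" "f \<in> edges c"
  shows "reach (E0 - {f}) (tG f) (hG f)"
proof -
  have "walk E0 c" using assms(1,2) by (auto simp: simple_cycle_def walk_iff)
  then show ?thesis using closed_trail_nonbridge simple_cycleD(4,5)[OF assms(1)] assms(3) by auto
qed

lemma cycle_through_nonbridge:
  assumes "f \<in> S" "reach (S - {f}) (hG f) (tG f)"
  shows "\<exists>C. simple_cycle S C \<and> f \<in> edges C"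
proof -
  define d where "d = (f, True)"
  have dd: "dt d = tG f" "dh d = hG f" "fst d = f" by (simp_all add: d_def dtail_def dhead_def)
  show ?thesis
  proof (cases "tG f = hG f")
    case True
    have "simple_cycle S [d]" using dd True assms(1) by (intro simple_cycleI) (auto simp: walk_iff closed_iff)
    then show ?thesis using dd by force
  next
    case False
    obtain p where p: "walk (S - {f}) p" "dt (hd p) = hG f" "dh (last p) = tG f"
      "distinct (map dt p)" "tG f \<notin> dt ` set p" "non_backtracking p"
      using shortest_path[OF assms(2)] False by metis
    have ne: "p \<noteq> []" using p(1) by (simp add: walk_iff)
    have fp: "f \<notin> edges p" using p(1) by (auto simp: walk_iff)
    have "simple_cycle S (d # p)"
    proof (rule simple_cycleI)
      show "walk S (d # p)" using p(1,2) dd assms(1) ne by (auto simp: walk_iff linked_Cons)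
      show "closed (d # p)" using p(3) dd ne by (simp add: closed_iff)
      have "hd p \<noteq> dinv d" using fp ne dd by (metis dinv_simps(2) hd_in_set image_eqI)
      then show "non_backtracking (d # p)" using p(6) by (simp add: non_backtracking_Cons)
      show "distinct (map dt (d # p))" using p(4,5) dd by simp
    qed
    then show ?thesis using dd by force
  qed
qed

lemma simple_cycle_dhead_inj:
  assumes "simple_cycle S C" "m < length C" "k < length C" "dh (C ! m) = dh (C ! k)"
  shows "m = k"
proof -
  have ch: "linked C" and cl: "closed C" and ne: "C \<noteq> []" and d: "distinct (map dt C)"
    using simple_cycleD[OF assms(1)] assms(1) by (auto simp: simple_cycle_def)
  define nx where "nx i = (if Suc i < length C then Suc i else 0)" for i
  have dhn: "dh (C ! i) = dt (C ! nx i)" if "i < length C" for i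
  proof (cases "Suc i < length C")
    case True then show ?thesis using linked_nth[OF ch True] by (simp add: nx_def)
  next
    case False
    then have "i = length C - 1" using that by simp
    then have "C ! i = last C" using ne by (simp add: last_conv_nth)
    then show ?thesis using cl ne False by (simp add: nx_def closed_iff hd_conv_nth)
  qed
  have nxl: "nx i < length C" if "i < length C" for i using that ne by (simp add: nx_def)
  have "nx m = nx k" using dhn[OF assms(2)] dhn[OF assms(3)] assms(4) distinct_map_nth_inj[OF d nxl[OF assms(2)] nxl[OF assms(3)]]
    by simp
  then show ?thesis using assms(2,3) by (auto simp: nx_def split: if_splits)
qed

lemma simple_cycle_step:
  assumes "simple_cycle S C" "d \<in> set C" "fst d' \<in> edges C" "dt d' = dh d" "d' \<noteq> dinv d"
  shows "d' \<in> set C"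
proof -
  obtain k where k: "k < length C" "C ! k = d" using assms(2) by (meson in_set_conv_nth)
  obtain m where m: "m < length C" "fst (C ! m) = fst d'" using assms(3) by (auto simp: in_set_conv_nth)
  from fst_eq_dedge_cases[OF m(2)] show ?thesis
  proof
    assume "C ! m = d'" then show ?thesis using nth_mem[OF m(1)] by simp
  next
    assume a: "C ! m = dinv d'"
    then have "dh (C ! m) = dh (C ! k)" using assms(4) k by simp
    then have "m = k" using simple_cycle_dhead_inj[OF assms(1) m(1) k(1)] by simp
    then have "dinv d = d'" using a k by simp
    then show ?thesis using assms(5) by simp
  qed
qed

lemma simple_cycle_step_rev:
  assumes "simple_cycle S C" "d \<in> dinv ` set C" "fst d' \<in> edges C" "dt d' = dh d" "d' \<noteq> dinv d"
  shows "d' \<in> dinv ` set C"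
proof -
  obtain k where k: "k < length C" "dinv (C ! k) = d" using assms(2) by (auto simp: in_set_conv_nth)
  obtain m where m: "m < length C" "fst (C ! m) = fst d'" using assms(3) by (auto simp: in_set_conv_nth)
  have d: "distinct (map dt C)" using assms(1) by (simp add: simple_cycle_def)
  from fst_eq_dedge_cases[OF m(2)] show ?thesis
  proof
    assume a: "C ! m = d'"
    then have "dt (C ! m) = dt (C ! k)" using assms(4) k by auto
    then have "m = k" using distinct_map_nth_inj[OF d m(1) k(1)] by simp
    then show ?thesis using a k assms(5) by auto
  next
    assume "C ! m = dinv d'"
    then have "d' = dinv (C ! m)" by simp
    then show ?thesis using nth_mem[OF m(1)] by blast
  qed
qed

section \<open>Degrees and CEL subgraphs\<close>

lemma out_dedges_eq:
  "{d. fst d \<in> E \<and> dt d = v} =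
     (\<lambda>e. (e, True)) ` {e\<in>E. tG e = v} \<union> (\<lambda>e. (e, False)) ` {e\<in>E. hG e = v}"
proof (rule set_eqI)
  fix x :: "'e dedge"
  obtain e b where x: "x = (e, b)" by (cases x)
  show "x \<in> {d. fst d \<in> E \<and> dt d = v} \<longleftrightarrow>
    x \<in> (\<lambda>e. (e, True)) ` {e\<in>E. tG e = v} \<union> (\<lambda>e. (e, False)) ` {e\<in>E. hG e = v}"
    unfolding x by (cases b) (auto simp: dtail_def)
qed

lemma degree_eq_card_out:
  assumes "finite E"
  shows "degree E tG hG v = card {d. fst d \<in> E \<and> dt d = v}"
proof -
  have f: "finite {e\<in>E. tG e = v}" "finite {e\<in>E. hG e = v}" using assms by auto
  have "card ((\<lambda>e. (e, True)) ` {e\<in>E. tG e = v} \<union> (\<lambda>e. (e, False)) ` {e\<in>E. hG e = v})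
      = card ((\<lambda>e. (e, True)) ` {e\<in>E. tG e = v}) + card ((\<lambda>e. (e, False)) ` {e\<in>E. hG e = v})"
    using f by (intro card_Un_disjoint) auto
  also have "\<dots> = card {e\<in>E. tG e = v} + card {e\<in>E. hG e = v}"
    by (subst card_image, simp add: inj_on_def)+ simp
  finally show ?thesis by (simp add: out_dedges_eq degree_def)
qed

lemma finite_out_dedges: "finite E \<Longrightarrow> finite {d. fst d \<in> E \<and> dt d = v}"
  by (simp add: out_dedges_eq)

lemma two_le_degree:
  assumes "finite E" "fst d1 \<in> E" "fst d2 \<in> E" "dh d1 = v" "dt d2 = v" "d2 \<noteq> dinv d1"
  shows "2 \<le> degree E tG hG v"
proof -
  have "{dinv d1, d2} \<subseteq> {d. fst d \<in> E \<and> dt d = v}" using assms by auto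
  then have "card {dinv d1, d2} \<le> card {d. fst d \<in> E \<and> dt d = v}"
    using finite_out_dedges[OF assms(1)] by (rule card_mono[rotated])
  moreover have "dinv d1 \<noteq> d2" using assms(6) by (metis dinv_simps(1))
  then have "card {dinv d1, d2} = 2" by simp
  ultimately show ?thesis using degree_eq_card_out[OF assms(1)] by simp
qed

lemma simple_cycle_degree:
  assumes "simple_cycle S c" "v \<in> verts c" "finite E0" "edges c \<subseteq> E0"
  shows "2 \<le> degree E0 tG hG v"
proof -
  obtain c' where c': "simple_cycle S c'" "set c' = set c" "dt (hd c') = v"
    using simple_cycle_start_at[OF assms(1,2)] by blast
  have n: "c' \<noteq> []" "closed c'" "last c' \<noteq> dinv (hd c')"
    using simple_cycleD(1,4,10)[OF c'(1)] by simp_all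
  then have "hd c' \<noteq> dinv (last c')" by (metis dinv_simps(1))
  moreover have "last c' \<in> set c" "hd c' \<in> set c" using n(1) c'(2) by (metis last_in_set, metis hd_in_set)
  moreover have "dh (last c') = v" using n c' by (simp add: closed_iff)
  ultimately show ?thesis using c' assms(3,4) by (intro two_le_degree[of _ "last c'" "hd c'"]) auto
qed

lemma inner_vertex_degree:
  assumes "linked P" "non_backtracking P" "v \<in> dt ` set (tl P)" "finite E0" "edges P \<subseteq> E0"
  shows "2 \<le> degree E0 tG hG v"
proof -
  obtain i where i: "0 < i" "i < length P" "v = dt (P ! i)" using assms(3) dtail_set_tl[of P] by auto
  then have "P ! (i - 1) \<in> set P" "P ! i \<in> set P" by auto
  then show ?thesis
    using linked_nth[OF assms(1), of "i - 1"] non_backtracking_nth[OF assms(2), of "i - 1"] i assms(4,5)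
    by (intro two_le_degree[of _ "P ! (i - 1)" "P ! i"]) auto
qed

lemma handshake:
  assumes "finite V" "finite E" "\<forall>e\<in>E. tG e \<in> V \<and> hG e \<in> V"
  shows "(\<Sum>v\<in>V. degree E tG hG v) = 2 * card E"
proof -
  have part: "(\<Sum>v\<in>V. card {e\<in>E. g e = v}) = card E" if g: "\<forall>e\<in>E. g e \<in> V" for g :: "'e \<Rightarrow> 'v"
  proof -
    have "card (\<Union>v\<in>V. {e\<in>E. g e = v}) = (\<Sum>v\<in>V. card {e\<in>E. g e = v})"
      using assms(1,2) by (intro card_UN_disjoint) auto
    moreover have "(\<Union>v\<in>V. {e\<in>E. g e = v}) = E" using g by auto
    ultimately show ?thesis by simp
  qed
  have "(\<Sum>v\<in>V. degree E tG hG v) =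
     (\<Sum>v\<in>V. card {e\<in>E. tG e = v}) + (\<Sum>v\<in>V. card {e\<in>E. hG e = v})"
    by (simp add: degree_def sum.distrib)
  also have "\<dots> = 2 * card E" using part[of tG] part[of hG] assms(3) by simp
  finally show ?thesis .
qed

lemma degree_mono:
  assumes "finite E'" "E0 \<subseteq> E'"
  shows "degree E0 tG hG v \<le> degree E' tG hG v"
proof -
  have "finite E0" using assms finite_subset by blast
  then show ?thesis using degree_eq_card_out[OF assms(1)] degree_eq_card_out[of E0] assms
    by (simp add: card_mono finite_out_dedges subset_iff)
qed

lemma connected_degree_pos:
  assumes "connected_graph V' E' tG hG" "finite E'" "E' \<noteq> {}"
    "\<forall>e\<in>E'. tG e \<in> V' \<and> hG e \<in> V'" "v \<in> V'"
  shows "degree E' tG hG v \<noteq> 0"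
proof -
  have "\<exists>d. fst d \<in> E' \<and> dt d = v"
  proof (cases "\<exists>u\<in>V'. u \<noteq> v")
    case True
    then obtain w where w: "walk E' w" "dt (hd w) = v"
      using assms(1,5) unfolding connected_graph_def by metis
    then have "fst (hd w) \<in> E'" by (auto simp: walk_iff)
    then show ?thesis using w(2) by blast
  next
    case False
    obtain e where "e \<in> E'" using assms(3) by blast
    then have "tG e = v" using assms(4) False by blast
    then show ?thesis using \<open>e \<in> E'\<close> by (intro exI[of _ "(e, True)"]) (simp add: dtail_def)
  qed
  then have "card {d. fst d \<in> E' \<and> dt d = v} \<noteq> 0"
    using card_0_eq[OF finite_out_dedges[OF assms(2)]] by blast
  then show ?thesis using degree_eq_card_out[OF assms(2)] by simp
qed

lemma cel_subgraphsD:
  assumes "(V', E') \<in> cel_subgraphs V E tG hG"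
  shows "finite V'" "finite E'" "V' \<subseteq> V" "E' \<subseteq> E" "\<forall>e\<in>E'. tG e \<in> V' \<and> hG e \<in> V'"
    "connected_graph V' E' tG hG" "int (card V') - int (card E') = -1"
    "\<forall>v\<in>V'. 2 \<le> degree E' tG hG v"
proof -
  have a: "finite V'" "finite E'" "V' \<subseteq> V" "E' \<subseteq> E" "\<forall>e\<in>E'. tG e \<in> V' \<and> hG e \<in> V'"
    "connected_graph V' E' tG hG" "int (card V') - int (card E') = -1"
    "\<forall>v\<in>V'. degree E' tG hG v \<noteq> 1"
    using assms by (auto simp: cel_subgraphs_def is_subgraph_def euler_char_def leafless_def)
  then show "finite V'" "finite E'" "V' \<subseteq> V" "E' \<subseteq> E" "\<forall>e\<in>E'. tG e \<in> V' \<and> hG e \<in> V'"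
    "connected_graph V' E' tG hG" "int (card V') - int (card E') = -1" by simp_all
  have "E' \<noteq> {}" using a(7) by auto
  then show "\<forall>v\<in>V'. 2 \<le> degree E' tG hG v"
    using connected_degree_pos[OF a(6,2) _ a(5)] a(8) by (metis One_nat_def less_2_cases not_le)
qed

lemma cel_subgraphI:
  assumes "V0 \<subseteq> V" "E0 \<subseteq> E" "finite V0" "finite E0"
    "\<And>e. e \<in> E0 \<Longrightarrow> tG e \<in> V0 \<and> hG e \<in> V0"
    "connected_graph V0 E0 tG hG" "int (card V0) - int (card E0) = -1"
    "\<And>v. v \<in> V0 \<Longrightarrow> 2 \<le> degree E0 tG hG v"
  shows "(V0, E0) \<in> cel_subgraphs V E tG hG"
  using assms unfolding cel_subgraphs_def is_subgraph_def euler_char_def leafless_def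
  by (auto simp: numeral_2_eq_2) (metis One_nat_def Suc_n_not_le_n assms(8) numeral_2_eq_2)

lemma degree_eq_if_same_euler_char:
  assumes fV: "finite V'" and fE: "finite E'" and sub: "V0 \<subseteq> V'" "E0 \<subseteq> E'"
    and e0: "\<forall>e\<in>E0. tG e \<in> V0 \<and> hG e \<in> V0" and e1: "\<forall>e\<in>E'. tG e \<in> V' \<and> hG e \<in> V'"
    and deg: "\<forall>v\<in>V'. 2 \<le> degree E' tG hG v"
    and c0: "int (card V0) - int (card E0) = -1" and c1: "int (card V') - int (card E') = -1"
    and v: "v \<in> V0"
  shows "degree E0 tG hG v = degree E' tG hG v"
proof -
  have fV0: "finite V0" and fE0: "finite E0" using sub fV fE finite_subset by blast+
  have mono: "\<And>v. degree E0 tG hG v \<le> degree E' tG hG v" using degree_mono[OF fE sub(2)] .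
  have split: "(\<Sum>v\<in>V'. degree E' tG hG v) = (\<Sum>v\<in>V0. degree E' tG hG v) + (\<Sum>v\<in>V'-V0. degree E' tG hG v)"
    using fV sub(1) by (metis add.commute sum.subset_diff)
  have "(\<Sum>v\<in>V'-V0. (2::nat)) \<le> (\<Sum>v\<in>V'-V0. degree E' tG hG v)"
    using deg by (intro sum_mono) auto
  then have ge2: "2 * card (V' - V0) \<le> (\<Sum>v\<in>V'-V0. degree E' tG hG v)" by simp
  have "(\<Sum>v\<in>V0. degree E0 tG hG v) \<le> (\<Sum>v\<in>V0. degree E' tG hG v)"
    using mono by (intro sum_mono) auto
  then have eqs: "(\<Sum>v\<in>V0. degree E' tG hG v) = (\<Sum>v\<in>V0. degree E0 tG hG v)"
    using handshake[OF fV fE e1] handshake[OF fV0 fE0 e0] split ge2 card_Diff_subset[OF fV0 sub(1)]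
      card_mono[OF fV sub(1)] c0 c1
    by linarith
  show ?thesis
  proof (rule ccontr)
    assume "degree E0 tG hG v \<noteq> degree E' tG hG v"
    then have "degree E0 tG hG v < degree E' tG hG v" using mono[of v] by simp
    then have "(\<Sum>v\<in>V0. degree E0 tG hG v) < (\<Sum>v\<in>V0. degree E' tG hG v)"
      using fV0 v mono by (intro sum_strict_mono_ex1) auto
    then show False using eqs by simp
  qed
qed

lemma mem_if_degree_eq:
  assumes "finite E'" "E0 \<subseteq> E'" "degree E0 tG hG v = degree E' tG hG v"
    and "e \<in> E'" "tG e = v \<or> hG e = v"
  shows "e \<in> E0"
proof -
  have fE0: "finite E0" using assms(1,2) finite_subset by blast
  have out: "{d. fst d \<in> E0 \<and> dt d = v} = {d. fst d \<in> E' \<and> dt d = v}"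
    using assms(2,3) degree_eq_card_out[OF fE0] degree_eq_card_out[OF assms(1)]
    by (intro card_subset_eq finite_out_dedges[OF assms(1)]) auto
  from assms(5) show ?thesis
  proof
    assume "tG e = v"
    then have "(e, True) \<in> {d. fst d \<in> E' \<and> dt d = v}" using assms(4) by (simp add: dtail_def)
    then show ?thesis unfolding out[symmetric] by simp
  next
    assume "hG e = v"
    then have "(e, False) \<in> {d. fst d \<in> E' \<and> dt d = v}" using assms(4) by (simp add: dtail_def)
    then show ?thesis unfolding out[symmetric] by simp
  qed
qed

lemma cel_subgraph_maximal:
  assumes fV: "finite V'" and fE: "finite E'" and sub: "V0 \<subseteq> V'" "E0 \<subseteq> E'"
    and e0: "\<forall>e\<in>E0. tG e \<in> V0 \<and> hG e \<in> V0" and e1: "\<forall>e\<in>E'. tG e \<in> V' \<and> hG e \<in> V'"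
    and con: "connected_graph V' E' tG hG" and deg: "\<forall>v\<in>V'. 2 \<le> degree E' tG hG v"
    and c0: "int (card V0) - int (card E0) = -1" and c1: "int (card V') - int (card E') = -1"
  shows "V0 = V' \<and> E0 = E'"
proof -
  have key: "e \<in> E0" if "e \<in> E'" "tG e \<in> V0 \<or> hG e \<in> V0" for e
    using that mem_if_degree_eq[OF fE sub(2) degree_eq_if_same_euler_char[OF assms(1-6,8-10)]]
    by blast
  have "E0 \<noteq> {}" using c0 by auto
  then obtain r where r: "r \<in> V0" using e0 by blast
  have VV: "V' \<subseteq> V0"
  proof
    fix v assume v: "v \<in> V'"
    show "v \<in> V0"
    proof (rule ccontr)
      assume "v \<notin> V0"
      have "reach E' r v" using reach_if_connected[OF con] r v sub(1) by blast
      then obtain e where "e \<in> E'" "(tG e \<in> V0 \<and> hG e \<notin> V0) \<or> (hG e \<in> V0 \<and> tG e \<notin> V0)"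
        using crossing_edge[OF _ r \<open>v \<notin> V0\<close>] by blast
      then show False using key e0 by blast
    qed
  qed
  then have "V0 = V'" using sub(1) by blast
  moreover have "E' \<subseteq> E0" using key e1 VV by blast
  ultimately show ?thesis using sub(2) by blast
qed

definition extendable :: "'e set \<Rightarrow> bool" where
  "extendable S \<longleftrightarrow> (\<forall>d. fst d \<in> S \<longrightarrow> (\<exists>d'. fst d' \<in> S \<and> dt d' = dh d \<and> d' \<noteq> dinv d))"

lemma extendable_if_min_degree:
  assumes "finite E'" "\<forall>e\<in>E'. tG e \<in> V' \<and> hG e \<in> V'" "\<forall>v\<in>V'. 2 \<le> degree E' tG hG v"
  shows "extendable E'"
  unfolding extendable_def
proof (intro allI impI)
  fix d :: "'e dedge" assume d: "fst d \<in> E'"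
  let ?O = "{d'. fst d' \<in> E' \<and> dt d' = dh d}"
  have "dh d \<in> V'" using dhead_in[OF d assms(2)] .
  then have "2 \<le> card ?O" using assms(3) degree_eq_card_out[OF assms(1)] by simp
  have "\<not> ?O \<subseteq> {dinv d}"
  proof
    assume "?O \<subseteq> {dinv d}"
    then have "card ?O \<le> card {dinv d}" by (intro card_mono) auto
    then show False using \<open>2 \<le> card ?O\<close> by simp
  qed
  then show "\<exists>d'. fst d' \<in> E' \<and> dt d' = dh d \<and> d' \<noteq> dinv d" by blast
qed

section \<open>Ears and barbell configurations\<close>

text \<open>An ear of the simple cycle \<open>C\<close> is a path leaving \<open>C\<close> through an edge not on \<open>C\<close> and
  meeting \<open>C\<close> again only at its last vertex; \<open>C\<close> together with an ear is a theta graph, or a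
  figure-eight graph when the ear is closed.\<close>

definition ear :: "'e set \<Rightarrow> 'e dedge list \<Rightarrow> 'e dedge list \<Rightarrow> bool" where
  "ear S C Q \<longleftrightarrow> simple_cycle S C \<and> walk S Q \<and> non_backtracking Q \<and> distinct (map dt Q) \<and>
     dt (hd Q) \<in> verts C \<and> dh (last Q) \<in> verts C \<and>
     (\<forall>i. 0 < i \<and> i < length Q \<longrightarrow> dt (Q ! i) \<notin> verts C) \<and> fst (hd Q) \<notin> edges C"

definition barbell_config :: "'e set \<Rightarrow> 'e dedge list \<Rightarrow> 'e dedge list \<Rightarrow> 'e dedge list \<Rightarrow> bool" where
  "barbell_config S C P D \<longleftrightarrow> simple_cycle S C \<and> simple_cycle S D \<and> verts C \<inter> verts D = {} \<and>
     walk S P \<and> non_backtracking P \<and> distinct (map dt P) \<and> dt (hd P) \<in> verts C \<and> dh (last P) \<in> verts D \<and>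
     (\<forall>i. 0 < i \<and> i < length P \<longrightarrow> dt (P ! i) \<notin> verts C \<union> verts D)"

lemma edge_not_in_cycle:
  assumes "simple_cycle S C" "dt d \<notin> verts C \<or> dh d \<notin> verts C"
  shows "fst d \<notin> edges C"
proof
  assume "fst d \<in> edges C"
  then have "tG (fst d) \<in> verts C" "hG (fst d) \<in> verts C" using simple_cycle_edge_ends[OF assms(1)] by auto
  then show False using assms(2) dtail_cases[of d] dhead_cases[of d] by auto
qed

lemma earD:
  assumes "ear S C Q"
  shows "Q \<noteq> []" "linked Q" "distinct (map fst Q)" "edges Q \<inter> edges C = {}" "edges Q \<subseteq> S"
    "dt ` set (tl Q) \<inter> verts C = {}"
proof -
  have a: "simple_cycle S C" "walk S Q" "non_backtracking Q" "distinct (map dt Q)" "fst (hd Q) \<notin> edges C"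
    "\<And>i. 0 < i \<Longrightarrow> i < length Q \<Longrightarrow> dt (Q ! i) \<notin> verts C"
    using assms by (auto simp: ear_def)
  show q: "Q \<noteq> []" "linked Q" "edges Q \<subseteq> S" using a(2) by (auto simp: walk_iff)
  show "distinct (map fst Q)" using distinct_edges_if_distinct_tails q a by blast
  show "dt ` set (tl Q) \<inter> verts C = {}" using a(6) dtail_set_tl[of Q] by auto
  have "fst (Q ! i) \<notin> edges C" if "i < length Q" for i
  proof (cases i)
    case 0 then show ?thesis using a(5) q(1) by (simp add: hd_conv_nth)
  next
    case (Suc j) then show ?thesis using edge_not_in_cycle[OF a(1)] a(6) that by auto
  qed
  then have "\<forall>d\<in>set Q. fst d \<notin> edges C" by (metis in_set_conv_nth)
  then show "edges Q \<inter> edges C = {}" by blast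
qed

lemma barbell_configD:
  assumes "barbell_config S C P D"
  shows "P \<noteq> []" "linked P" "distinct (map fst P)" "edges P \<inter> edges C = {}" "edges P \<inter> edges D = {}"
    "edges C \<inter> edges D = {}" "edges P \<subseteq> S" "dt ` set (tl P) \<inter> verts C = {}" "dt ` set (tl P) \<inter> verts D = {}"
    "dt (hd P) \<noteq> dh (last P)"
proof -
  have a: "simple_cycle S C" "simple_cycle S D" "verts C \<inter> verts D = {}" "walk S P" "non_backtracking P" "distinct (map dt P)"
    "dt (hd P) \<in> verts C" "dh (last P) \<in> verts D"
    "\<And>i. 0 < i \<Longrightarrow> i < length P \<Longrightarrow> dt (P ! i) \<notin> verts C \<union> verts D"
    using assms by (auto simp: barbell_config_def)
  show q: "P \<noteq> []" "linked P" "edges P \<subseteq> S" using a(4) by (auto simp: walk_iff)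
  show "distinct (map fst P)" using distinct_edges_if_distinct_tails q a by blast
  show "dt ` set (tl P) \<inter> verts C = {}" "dt ` set (tl P) \<inter> verts D = {}"
    using a(9) dtail_set_tl[of P] by auto
  show "dt (hd P) \<noteq> dh (last P)" using a(3,7,8) by auto
  have "fst (P ! i) \<notin> edges C \<and> fst (P ! i) \<notin> edges D" if "i < length P" for i
  proof (cases i)
    case 0
    have h: "hd P = P ! 0" using q(1) by (simp add: hd_conv_nth)
    have "dh (P ! 0) \<notin> verts C"
      using linked_dh_nth[OF q(2), of 0] a(3,8,9) q(1) by (auto split: if_splits)
    then show ?thesis using 0 edge_not_in_cycle[OF a(1), of "P ! 0"] edge_not_in_cycle[OF a(2), of "P ! 0"]
      a(3,7) h by auto
  next
    case (Suc j) then show ?thesis using edge_not_in_cycle[OF a(1)] edge_not_in_cycle[OF a(2)] a(9) that by auto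
  qed
  then have "\<forall>d\<in>set P. fst d \<notin> edges C \<and> fst d \<notin> edges D" by (metis in_set_conv_nth)
  then show "edges P \<inter> edges C = {}" "edges P \<inter> edges D = {}" by blast+
  show "edges C \<inter> edges D = {}"
  proof (rule ccontr)
    assume "edges C \<inter> edges D \<noteq> {}"
    then obtain e where "e \<in> edges C" "e \<in> edges D" by blast
    then have "tG e \<in> verts C" "tG e \<in> verts D"
      using simple_cycle_edge_ends(1)[OF a(1)] simple_cycle_edge_ends(1)[OF a(2)] by auto
    then show False using a(3) by blast
  qed
qed

definition ear_verts where "ear_verts C Q = verts C \<union> dt ` set Q"

definition ear_edges where "ear_edges C Q = edges C \<union> edges Q"

lemma finite_ear: "finite (ear_verts C Q)" "finite (ear_edges C Q)"
  by (auto simp: ear_verts_def ear_edges_def verts_def)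

lemma ear_edges_subset:
  assumes "ear S C Q"
  shows "ear_edges C Q \<subseteq> S"
proof -
  have "simple_cycle S C" using assms by (simp add: ear_def)
  then show ?thesis using simple_cycleD(6) earD(5)[OF assms] by (auto simp: ear_edges_def)
qed

lemma ear_verts_subset:
  assumes "ear S C Q" "\<forall>e\<in>S. tG e \<in> V \<and> hG e \<in> V"
  shows "ear_verts C Q \<subseteq> V"
  using ear_edges_subset[OF assms(1)] dtail_in[of _ S V] assms(2)
  by (auto simp: ear_verts_def ear_edges_def verts_def)

lemma card_ear_edges:
  assumes "ear S C Q"
  shows "card (ear_edges C Q) = length C + length Q"
proof -
  have "simple_cycle S C" using assms by (simp add: ear_def)
  then show ?thesis
    unfolding ear_edges_def using simple_cycleD(9) earD(4)[OF assms]
      distinct_card[OF earD(3)[OF assms]]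
    by (subst card_Un_disjoint) (auto simp: Int_commute)
qed

lemma ear_verts_tl:
  assumes "ear S C Q"
  shows "ear_verts C Q = verts C \<union> dt ` set (tl Q)"
  using assms dtail_set_hd_tl[OF earD(1)[OF assms]] by (auto simp: ear_def ear_verts_def)

lemma card_ear_verts:
  assumes "ear S C Q"
  shows "card (ear_verts C Q) = length C + length Q - 1"
proof -
  have "simple_cycle S C" "distinct (map dt Q)" using assms by (auto simp: ear_def)
  then have "card (ear_verts C Q) = length C + (length Q - 1)"
    unfolding ear_verts_tl[OF assms] using simple_cycleD(8) earD(6)[OF assms]
      card_dtail_set_tl
    by (subst card_Un_disjoint) (auto simp: verts_def Int_commute)
  then show ?thesis using earD(1)[OF assms] by (cases Q) auto
qed

lemma ear_euler_char:
  assumes "ear S C Q"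
  shows "int (card (ear_verts C Q)) - int (card (ear_edges C Q)) = -1"
  using card_ear_verts[OF assms] card_ear_edges[OF assms] earD(1)[OF assms]
  by (cases Q) auto

lemma ear_edge_ends:
  assumes "ear S C Q" "e \<in> ear_edges C Q"
  shows "tG e \<in> ear_verts C Q \<and> hG e \<in> ear_verts C Q"
proof -
  have C: "simple_cycle S C" and last: "dh (last Q) \<in> verts C" using assms by (auto simp: ear_def)
  consider "e \<in> edges C" | d where "d \<in> set Q" "e = fst d" using assms(2) by (auto simp: ear_edges_def)
  then show ?thesis
  proof cases
    case 1 then show ?thesis using simple_cycle_edge_ends[OF C] by (auto simp: ear_verts_def)
  next
    case 2
    have "dt d \<in> ear_verts C Q" using 2 by (auto simp: ear_verts_def)
    moreover have "dh d \<in> ear_verts C Q"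
      using dhead_in_tails_or_last[OF earD(2)[OF assms(1)] 2(1)] last ear_verts_tl[OF assms(1)]
      by auto
    ultimately show ?thesis using ends_dedge[of d] 2 by (metis insertE singletonD insertI1 insertI2)
  qed
qed

lemma ear_connected:
  assumes "ear S C Q"
  shows "connected_graph (ear_verts C Q) (ear_edges C Q) tG hG"
proof (rule connected_graphI[of "dt (hd Q)"])
  have C: "simple_cycle S C" and Q: "walk S Q" and hd: "dt (hd Q) \<in> verts C"
    using assms by (auto simp: ear_def)
  have wC: "walk (ear_edges C Q) C" using C by (auto simp: simple_cycle_def walk_iff ear_edges_def)
  have wQ: "walk (ear_edges C Q) Q" using Q by (auto simp: walk_iff ear_edges_def)
  show "dt (hd Q) \<in> ear_verts C Q" using hd by (simp add: ear_verts_def)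
  fix x assume "x \<in> ear_verts C Q"
  then consider "x \<in> verts C" | "x \<in> dt ` set Q" by (auto simp: ear_verts_def)
  then show "reach (ear_edges C Q) (dt (hd Q)) x"
  proof cases
    case 1 then show ?thesis using reach_within_walk[OF wC] hd by (auto simp: verts_def)
  next
    case 2 then show ?thesis using reach_within_walk[OF wQ] earD(1)[OF assms] by auto
  qed
qed

lemma ear_degree:
  assumes "ear S C Q" "v \<in> ear_verts C Q"
  shows "2 \<le> degree (ear_edges C Q) tG hG v"
proof -
  have C: "simple_cycle S C" and nbQ: "non_backtracking Q" using assms by (auto simp: ear_def)
  consider "v \<in> verts C" | "v \<in> dt ` set (tl Q)" using assms ear_verts_tl by blast
  then show ?thesis
  proof cases
    case 1 show ?thesis by (rule simple_cycle_degree[OF C 1 finite_ear(2)]) (auto simp: ear_edges_def)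
  next
    case 2 show ?thesis
      by (rule inner_vertex_degree[OF earD(2)[OF assms(1)] nbQ 2 finite_ear(2)])
        (auto simp: ear_edges_def)
  qed
qed

lemma ear_nonbridge:
  assumes "ear S C Q" "f \<in> ear_edges C Q"
  shows "reach (ear_edges C Q - {f}) (tG f) (hG f)"
proof -
  have C: "simple_cycle S C" and Q: "walk S Q" and ends: "dt (hd Q) \<in> verts C" "dh (last Q) \<in> verts C"
    using assms by (auto simp: ear_def)
  have wQ: "walk (ear_edges C Q) Q" using Q by (auto simp: walk_iff ear_edges_def)
  note Qf = earD[OF assms(1)]
  show ?thesis
  proof (cases "f \<in> edges C")
    case True
    then show ?thesis using simple_cycle_nonbridge[OF C] by (auto simp: ear_edges_def)
  next
    case False
    then obtain d where d: "d \<in> set Q" "f = fst d" using assms(2) by (auto simp: ear_edges_def)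
    show ?thesis
    proof (cases "dh (last Q) = dt (hd Q)")
      case True
      then show ?thesis using closed_trail_nonbridge[OF wQ _ Qf(3) d(1)] d(2)
        by (simp add: closed_iff)
    next
      case False
      obtain A B where AB: "simple_cycle S (A @ B)" "set (A @ B) = set C" "A \<noteq> []"
        "dt (hd A) = dh (last Q)" "dh (last A) = dt (hd Q)"
        using simple_cycle_split[OF C ends(2,1) False] by blast
      have "walk (ear_edges C Q) A" using AB(1,2,3) unfolding simple_cycle_def walk_iff ear_edges_def
        by (auto simp: linked_append)
      then have "walk (ear_edges C Q) (Q @ A)" using wQ AB(4) by (intro walk_append) auto
      moreover have "closed (Q @ A)" using AB(3,5) Qf(1) by (simp add: closed_iff)
      moreover have "distinct (map fst (Q @ A))"
        using Qf(3,4) simple_cycleD(5)[OF AB(1)] AB(2) by auto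
      ultimately show ?thesis using closed_trail_nonbridge d by simp
    qed
  qed
qed

definition barbell_verts where "barbell_verts C P D = verts C \<union> verts D \<union> dt ` set P"

definition barbell_edges where "barbell_edges C P D = edges C \<union> edges D \<union> edges P"

lemma finite_barbell: "finite (barbell_verts C P D)" "finite (barbell_edges C P D)"
  by (auto simp: barbell_verts_def barbell_edges_def verts_def)

lemma barbell_edges_subset:
  assumes "barbell_config S C P D"
  shows "barbell_edges C P D \<subseteq> S"
proof -
  have "simple_cycle S C" "simple_cycle S D" using assms by (auto simp: barbell_config_def)
  then show ?thesis using simple_cycleD(6) barbell_configD(7)[OF assms]
    by (auto simp: barbell_edges_def)
qed

lemma barbell_verts_subset:
  assumes "barbell_config S C P D" "\<forall>e\<in>S. tG e \<in> V \<and> hG e \<in> V"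
  shows "barbell_verts C P D \<subseteq> V"
  using barbell_edges_subset[OF assms(1)] dtail_in[of _ S V] assms(2)
  by (auto simp: barbell_verts_def barbell_edges_def verts_def)

lemma card_barbell_edges:
  assumes "barbell_config S C P D"
  shows "card (barbell_edges C P D) = length C + length D + length P"
proof -
  have "simple_cycle S C" "simple_cycle S D" using assms by (auto simp: barbell_config_def)
  then have "card (edges C \<union> edges D) = length C + length D"
    using simple_cycleD(9) barbell_configD(6)[OF assms] by (subst card_Un_disjoint) auto
  then show ?thesis
    unfolding barbell_edges_def using distinct_card[OF barbell_configD(3)[OF assms]]
      barbell_configD(4,5)[OF assms]
    by (subst card_Un_disjoint) auto
qed

lemma barbell_verts_tl:
  assumes "barbell_config S C P D"
  shows "barbell_verts C P D = (verts C \<union> verts D) \<union> dt ` set (tl P)"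
  using assms dtail_set_hd_tl[OF barbell_configD(1)[OF assms]]
  by (auto simp: barbell_config_def barbell_verts_def)

lemma card_barbell_verts:
  assumes "barbell_config S C P D"
  shows "card (barbell_verts C P D) = length C + length D + length P - 1"
proof -
  have C: "simple_cycle S C" "simple_cycle S D" "verts C \<inter> verts D = {}" "distinct (map dt P)"
    using assms by (auto simp: barbell_config_def)
  then have "card (verts C \<union> verts D) = length C + length D"
    using simple_cycleD(8) by (subst card_Un_disjoint) (auto simp: verts_def)
  then have "card (barbell_verts C P D) = length C + length D + (length P - 1)"
    unfolding barbell_verts_tl[OF assms]
    using barbell_configD(8,9)[OF assms] card_dtail_set_tl[OF C(4)]
    by (subst card_Un_disjoint) (auto simp: verts_def)
  then show ?thesis using barbell_configD(1)[OF assms] by (cases P) auto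
qed

lemma barbell_edge_ends:
  assumes "barbell_config S C P D" "e \<in> barbell_edges C P D"
  shows "tG e \<in> barbell_verts C P D \<and> hG e \<in> barbell_verts C P D"
proof -
  have C: "simple_cycle S C" "simple_cycle S D" and last: "dh (last P) \<in> verts D"
    using assms by (auto simp: barbell_config_def)
  consider "e \<in> edges C" | "e \<in> edges D" | d where "d \<in> set P" "e = fst d"
    using assms(2) by (auto simp: barbell_edges_def)
  then show ?thesis
  proof cases
    case 1 then show ?thesis using simple_cycle_edge_ends[OF C(1)] by (auto simp: barbell_verts_def)
  next
    case 2 then show ?thesis using simple_cycle_edge_ends[OF C(2)] by (auto simp: barbell_verts_def)
  next
    case 3
    have "dt d \<in> barbell_verts C P D" using 3 by (auto simp: barbell_verts_def)
    moreover have "dh d \<in> barbell_verts C P D"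
      using dhead_in_tails_or_last[OF barbell_configD(2)[OF assms(1)] 3(1)] last
        barbell_verts_tl[OF assms(1)] by auto
    ultimately show ?thesis using ends_dedge[of d] 3 by (metis insertE singletonD insertI1 insertI2)
  qed
qed

lemma barbell_connected:
  assumes "barbell_config S C P D"
  shows "connected_graph (barbell_verts C P D) (barbell_edges C P D) tG hG"
proof (rule connected_graphI[of "dt (hd P)"])
  let ?E = "barbell_edges C P D"
  have a: "simple_cycle S C" "simple_cycle S D" "walk S P" "dt (hd P) \<in> verts C" "dh (last P) \<in> verts D"
    using assms by (auto simp: barbell_config_def)
  have wC: "walk ?E C" using a(1) by (auto simp: simple_cycle_def walk_iff barbell_edges_def)
  have wD: "walk ?E D" using a(2) by (auto simp: simple_cycle_def walk_iff barbell_edges_def)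
  have wP: "walk ?E P" using a(3) by (auto simp: walk_iff barbell_edges_def)
  show "dt (hd P) \<in> barbell_verts C P D" using a(4) by (simp add: barbell_verts_def)
  have rl: "reach ?E (dt (hd P)) (dh (last P))" using reach_within_walk[OF wP] wP by (auto simp: walk_iff)
  fix x assume "x \<in> barbell_verts C P D"
  then consider "x \<in> verts C" | "x \<in> verts D" | "x \<in> dt ` set P" by (auto simp: barbell_verts_def)
  then show "reach ?E (dt (hd P)) x"
  proof cases
    case 1 then show ?thesis using reach_within_walk[OF wC] a(4) by (auto simp: verts_def)
  next
    case 2
    then have "reach ?E (dh (last P)) x" using reach_within_walk[OF wD] a(5) by (auto simp: verts_def)
    then show ?thesis using rl reach_trans by blast
  next
    case 3 then show ?thesis using reach_within_walk[OF wP] wP by (auto simp: walk_iff)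
  qed
qed

lemma barbell_degree:
  assumes "barbell_config S C P D" "v \<in> barbell_verts C P D"
  shows "2 \<le> degree (barbell_edges C P D) tG hG v"
proof -
  have C: "simple_cycle S C" "simple_cycle S D" and nbP: "non_backtracking P"
    using assms by (auto simp: barbell_config_def)
  consider "v \<in> verts C" | "v \<in> verts D" | "v \<in> dt ` set (tl P)"
    using assms barbell_verts_tl by blast
  then show ?thesis
  proof cases
    case 1 show ?thesis by (rule simple_cycle_degree[OF C(1) 1 finite_barbell(2)])
        (auto simp: barbell_edges_def)
  next
    case 2 show ?thesis by (rule simple_cycle_degree[OF C(2) 2 finite_barbell(2)])
        (auto simp: barbell_edges_def)
  next
    case 3 show ?thesis
      by (rule inner_vertex_degree[OF barbell_configD(2)[OF assms(1)] nbP 3 finite_barbell(2)])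
        (auto simp: barbell_edges_def)
  qed
qed

lemma barbell_cycle_nonbridge:
  assumes "barbell_config S C P D" "f \<in> edges C \<union> edges D"
  shows "reach (barbell_edges C P D - {f}) (tG f) (hG f)"
proof -
  have C: "simple_cycle S C" "simple_cycle S D" using assms by (auto simp: barbell_config_def)
  from assms(2) show ?thesis
  proof
    assume "f \<in> edges C"
    then show ?thesis by (rule simple_cycle_nonbridge[OF C(1), rotated]) (auto simp: barbell_edges_def)
  next
    assume "f \<in> edges D"
    then show ?thesis by (rule simple_cycle_nonbridge[OF C(2), rotated]) (auto simp: barbell_edges_def)
  qed
qed

lemma barbell_config_euler_char:
  assumes "barbell_config S C P D"
  shows "int (card (barbell_verts C P D)) - int (card (barbell_edges C P D)) = -1"
  using card_barbell_verts[OF assms] card_barbell_edges[OF assms] barbell_configD(1)[OF assms]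
  by (cases P) auto

lemma ear_cel_subgraph:
  assumes "ear H C Q" "H \<subseteq> E" "\<forall>e\<in>E. tG e \<in> V \<and> hG e \<in> V"
  shows "(ear_verts C Q, ear_edges C Q) \<in> cel_subgraphs V E tG hG"
  using assms(2,3) finite_ear ear_verts_subset[OF assms(1), of V] ear_edges_subset[OF assms(1)]
    ear_edge_ends[OF assms(1)] ear_connected[OF assms(1)] ear_degree[OF assms(1)]
    ear_euler_char[OF assms(1)]
  by (intro cel_subgraphI) auto

lemma barbell_config_cel_subgraph:
  assumes "barbell_config H C P D" "H \<subseteq> E" "\<forall>e\<in>E. tG e \<in> V \<and> hG e \<in> V"
  shows "(barbell_verts C P D, barbell_edges C P D) \<in> cel_subgraphs V E tG hG"
  using assms(2,3) finite_barbell barbell_verts_subset[OF assms(1), of V] barbell_edges_subset[OF assms(1)]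
    barbell_edge_ends[OF assms(1)] barbell_connected[OF assms(1)] barbell_degree[OF assms(1)]
    barbell_config_euler_char[OF assms(1)]
  by (intro cel_subgraphI) auto

lemma is_pathI:
  assumes "walk S P" "non_backtracking P" "distinct (map fst P)" "dt (hd P) \<noteq> dh (last P)"
  shows "is_path S tG hG P"
  using assms by (simp add: is_path_def)

lemma is_barbell_if_barbell_config:
  assumes "barbell_config S C P D"
  shows "is_barbell (barbell_verts C P D) (barbell_edges C P D) tG hG"
proof -
  have a: "simple_cycle S C" "simple_cycle S D" "walk S P" "non_backtracking P" "dt (hd P) \<in> verts C" "dh (last P) \<in> verts D"
    using assms by (auto simp: barbell_config_def)
  note b = barbell_configD[OF assms]
  obtain C' where C': "simple_cycle S C'" "set C' = set C" "verts C' = verts C" "dt (hd C') = dt (hd P)"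
    using simple_cycle_start_at[OF a(1) a(5)] by blast
  obtain D' where D': "simple_cycle S D'" "set D' = set D" "verts D' = verts D" "dt (hd D') = dh (last P)"
    using simple_cycle_start_at[OF a(2) a(6)] by blast
  have wv: "walk_vertices tG hG C' = verts C" "walk_vertices tG hG D' = verts D"
    using simple_cycleD(7)[OF C'(1)] simple_cycleD(7)[OF D'(1)] C'(3) D'(3)
    by (auto simp: walk_vertices_def verts_def)
  have "dh ` set P \<subseteq> verts D \<union> dt ` set P"
    using dhead_in_tails_or_last[OF b(2)] a(6) b(1) by (auto simp: dtail_set_hd_tl) (metis list.set_sel(2))
  then have wvP: "verts C \<union> verts D \<union> walk_vertices tG hG P = barbell_verts C P D"
    by (auto simp: walk_vertices_def barbell_verts_def)
  have "barbell_decomp (barbell_verts C P D) (barbell_edges C P D) tG hG C' D' P"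
    unfolding barbell_decomp_def
  proof (intro conjI)
    show "is_cycle (barbell_edges C P D) tG hG C'" "is_cycle (barbell_edges C P D) tG hG D'"
    proof -
      have "simple_cycle (barbell_edges C P D) C'" using C'(1,2) unfolding simple_cycle_def walk_iff barbell_edges_def by auto
      moreover have "simple_cycle (barbell_edges C P D) D'" using D'(1,2) unfolding simple_cycle_def walk_iff barbell_edges_def by auto
      ultimately show "is_cycle (barbell_edges C P D) tG hG C'" "is_cycle (barbell_edges C P D) tG hG D'"
        using is_cycle_if_simple_cycle by blast+
    qed
    show "is_path (barbell_edges C P D) tG hG P"
      using a(3,4) b(3,10) by (intro is_pathI) (auto simp: walk_iff barbell_edges_def)
    show "walk_edges C' \<inter> walk_edges D' = {}" "walk_edges C' \<inter> walk_edges P = {}"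
      "walk_edges D' \<inter> walk_edges P = {}"
      using b(4,5,6) C'(2) D'(2) by (auto simp: walk_edges_def)
    show "dtail tG hG (hd P) = dtail tG hG (hd C')" "dhead tG hG (last P) = dtail tG hG (hd D')"
      using C'(4) D'(4) by simp_all
    show "barbell_edges C P D = walk_edges C' \<union> walk_edges D' \<union> walk_edges P"
      using C'(2) D'(2) by (simp add: barbell_edges_def walk_edges_def)
    show "barbell_verts C P D = walk_vertices tG hG C' \<union> walk_vertices tG hG D' \<union> walk_vertices tG hG P"
      using wv wvP by simp
  qed
  then show ?thesis by (auto simp: is_barbell_def)
qed

section \<open>Growing non-backtracking walks\<close>

lemma extendable_walk_to:
  assumes "finite S" "extendable S" "fst d0 \<in> S"
  shows "\<exists>ws. walk S ws \<and> non_backtracking ws \<and> hd ws = d0 \<and> distinct (map dt ws) \<and>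
     (\<forall>i. 0 < i \<and> i < length ws \<longrightarrow> dt (ws ! i) \<notin> T) \<and>
     (dh (last ws) \<in> T \<or> dh (last ws) \<in> dt ` set ws)"
proof -
  define good where "good ws \<longleftrightarrow> walk S ws \<and> non_backtracking ws \<and> hd ws = d0 \<and>
    distinct (map dt ws) \<and> (\<forall>i. 0 < i \<and> i < length ws \<longrightarrow> dt (ws ! i) \<notin> T)" for ws
  let ?VS = "dt ` (S \<times> UNIV)"
  have fin: "finite ?VS" using assms(1) by simp
  have bound: "length ws \<le> card ?VS" if "good ws" for ws
  proof -
    have "set ws \<subseteq> S \<times> UNIV" using that by (auto simp: good_def walk_iff mem_Times_iff)
    then have "dt ` set ws \<subseteq> ?VS" by (rule image_mono)
    then have "card (dt ` set ws) \<le> card ?VS" by (rule card_mono[OF fin])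
    moreover have "card (dt ` set ws) = length ws"
      using that distinct_card[of "map dt ws"] by (simp add: good_def)
    ultimately show ?thesis by simp
  qed
  have "\<exists>ws'. good ws' \<and> (dh (last ws') \<in> T \<or> dh (last ws') \<in> dt ` set ws')" if "good ws" for ws
    using that
  proof (induction "card ?VS - length ws" arbitrary: ws rule: less_induct)
    case less
    show ?case
    proof (cases "dh (last ws) \<in> T \<or> dh (last ws) \<in> dt ` set ws")
      case False
      have ws: "ws \<noteq> []" "fst (last ws) \<in> S" using less.prems by (auto simp: good_def walk_iff)
      then obtain d' where d': "fst d' \<in> S" "dt d' = dh (last ws)" "d' \<noteq> dinv (last ws)"
        using assms(2) unfolding extendable_def by blast
      have "good (ws @ [d'])"
        using less.prems ws d' False
        by (auto simp: good_def walk_iff linked_append non_backtracking_append nth_append)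
      moreover have "card ?VS - length (ws @ [d']) < card ?VS - length ws"
        using bound[OF \<open>good (ws @ [d'])\<close>] by simp
      ultimately show ?thesis using less.hyps by presburger
    qed (use less.prems in auto)
  qed
  moreover have "good [d0]" using assms(3) by (simp add: good_def walk_iff)
  ultimately obtain ws where "good ws" "dh (last ws) \<in> T \<or> dh (last ws) \<in> dt ` set ws" by blast
  then show ?thesis by (intro exI[of _ ws]) (simp add: good_def)
qed

lemma in_set_drop_nth: "x \<in> set (drop j ws) \<Longrightarrow> \<exists>m. j \<le> m \<and> m < length ws \<and> x = ws ! m"
proof -
  assume "x \<in> set (drop j ws)"
  then obtain m' where "m' < length (drop j ws)" "drop j ws ! m' = x" by (auto simp: in_set_conv_nth)
  then show ?thesis by (intro exI[of _ "j + m'"]) auto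
qed

lemma simple_cycle_if_extendable:
  assumes "finite S" "extendable S" "S \<noteq> {}"
  shows "\<exists>C. simple_cycle S C"
proof -
  obtain e where e: "e \<in> S" using assms(3) by blast
  obtain ws where ws: "walk S ws" "non_backtracking ws" "distinct (map dt ws)"
    "dh (last ws) \<in> ({} :: 'v set) \<or> dh (last ws) \<in> dt ` set ws"
    using extendable_walk_to[OF assms(1,2), of "(e, True)" "{}"] e by auto
  then obtain j where "j < length ws" "dh (last ws) = dt (ws ! j)"
    by (auto simp: in_set_conv_nth)
  then show ?thesis using simple_cycle_drop[OF ws(1-3)] by blast
qed

lemma barbell_config_lasso:
  assumes C: "simple_cycle S C" and ws: "walk S ws" "non_backtracking ws" "distinct (map dt ws)"
    "dt (hd ws) \<in> verts C" "\<forall>i. 0 < i \<and> i < length ws \<longrightarrow> dt (ws ! i) \<notin> verts C"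
    and j: "0 < j" "j < length ws" "dh (last ws) = dt (ws ! j)"
  shows "barbell_config S C (take j ws) (drop j ws)"
proof -
  let ?P = "take j ws" and ?D = "drop j ws"
  have chw: "linked ws" using ws(1) by (simp add: walk_iff)
  have sD: "simple_cycle S ?D" using simple_cycle_drop[OF ws(1-3) j(2,3)] .
  have VD: "\<exists>m. j \<le> m \<and> m < length ws \<and> x = dt (ws ! m)" if "x \<in> verts ?D" for x
    using that in_set_drop_nth unfolding verts_def by fastforce
  have disj: "verts C \<inter> verts ?D = {}" using VD ws(5) j(1) by fastforce
  have Pne: "?P \<noteq> []" using j by (cases ws) auto
  have wP: "walk S ?P" using ws(1) Pne linked_take[of ws j] by (auto simp: walk_iff dest: in_set_takeD)
  have "last ?P = ws ! (j - 1)" using Pne j by (simp add: last_conv_nth min_def)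
  then have "dh (last ?P) = dt (hd ?D)" using linked_nth[OF chw, of "j - 1"] j by (simp add: hd_drop_conv_nth)
  then have lP: "dh (last ?P) \<in> verts ?D" using j(2) by (simp add: verts_def)
  have inner: "dt (?P ! i) \<notin> verts C \<union> verts ?D" if "0 < i" "i < length ?P" for i
  proof -
    have ij: "i < j" "?P ! i = ws ! i" using that by auto
    have "dt (ws ! i) \<notin> verts ?D"
    proof
      assume "dt (ws ! i) \<in> verts ?D"
      then obtain m where "j \<le> m" "m < length ws" "dt (ws ! i) = dt (ws ! m)" using VD by blast
      then show False using distinct_map_nth_inj[OF ws(3), of i m] ij j by simp
    qed
    then show ?thesis using ws(5) that ij j by simp
  qed
  show ?thesis unfolding barbell_config_def
    using C sD disj wP non_backtracking_take[OF ws(2)] ws(3,4) Pne lP inner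
    by (simp add: take_map[symmetric])
qed

lemma ear_or_barbell_config:
  assumes "finite S" "extendable S" "simple_cycle S C" "fst d0 \<in> S" "fst d0 \<notin> edges C" "dt d0 \<in> verts C"
  shows "(\<exists>Q. ear S C Q) \<or> (\<exists>P D. barbell_config S C P D)"
proof -
  obtain ws where ws: "walk S ws" "non_backtracking ws" "hd ws = d0" "distinct (map dt ws)"
    "\<forall>i. 0 < i \<and> i < length ws \<longrightarrow> dt (ws ! i) \<notin> verts C"
    "dh (last ws) \<in> verts C \<or> dh (last ws) \<in> dt ` set ws"
    using extendable_walk_to[OF assms(1,2,4), of "verts C"] by blast
  show ?thesis
  proof (cases "dh (last ws) \<in> verts C")
    case True
    then have "ear S C ws" using assms(3,5,6) ws by (simp add: ear_def)
    then show ?thesis by blast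
  next
    case False
    then obtain j where j: "j < length ws" "dh (last ws) = dt (ws ! j)"
      using ws(6) by (auto simp: in_set_conv_nth)
    have "ws \<noteq> []" using ws(1) by (simp add: walk_iff)
    have "0 < j"
    proof (rule ccontr)
      assume "\<not> 0 < j"
      then show False using j ws(3) False assms(6) \<open>ws \<noteq> []\<close> by (simp add: hd_conv_nth)
    qed
    then show ?thesis using barbell_config_lasso[OF assms(3) ws(1,2,4) _ ws(5) _ j] ws(3) assms(6) by blast
  qed
qed

lemma simple_cycle_exit:
  assumes C: "simple_cycle S C" and D: "simple_cycle S D" and esc: "\<not> edges D \<subseteq> edges C"
    and ov: "verts C \<inter> verts D \<noteq> {}"
  shows "\<exists>d\<in>set D. dt d \<in> verts C \<and> fst d \<notin> edges C"
proof -
  obtain v where v: "v \<in> verts C" "v \<in> verts D" using ov by blast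
  obtain D1 where D1: "simple_cycle S D1" "set D1 = set D" "dt (hd D1) = v"
    using simple_cycle_start_at[OF D v(2)] by blast
  note b1 = simple_cycleD[OF D1(1)]
  have "\<exists>i<length D1. dt (D1 ! i) \<in> verts C \<and> fst (D1 ! i) \<notin> edges C"
  proof (rule ccontr)
    assume "\<not> ?thesis"
    then have H: "\<And>i. i < length D1 \<Longrightarrow> dt (D1 ! i) \<in> verts C \<Longrightarrow> fst (D1 ! i) \<in> edges C" by blast
    have all: "\<forall>i<length D1. dt (D1 ! i) \<in> verts C"
    proof (intro allI impI)
      fix i assume "i < length D1"
      then show "dt (D1 ! i) \<in> verts C"
      proof (induction i)
        case 0 then show ?case using D1(3) v(1) b1(1) by (simp add: hd_conv_nth)
      next
        case (Suc i)
        then have "fst (D1 ! i) \<in> edges C" using H by simp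
        then have "tG (fst (D1 ! i)) \<in> verts C" "hG (fst (D1 ! i)) \<in> verts C"
          using simple_cycle_edge_ends[OF C] by blast+
        then have "dh (D1 ! i) \<in> verts C" using dhead_cases[of "D1 ! i"] by auto
        then show ?case using linked_nth[OF b1(2) Suc.prems] by simp
      qed
    qed
    have "edges D \<subseteq> edges C"
    proof
      fix e assume "e \<in> edges D"
      then have "e \<in> edges D1" using D1(2) by simp
      then obtain d where "d \<in> set D1" "fst d = e" by blast
      then obtain i where "i < length D1" "fst (D1 ! i) = e" by (metis in_set_conv_nth)
      then show "e \<in> edges C" using H all by blast
    qed
    then show False using esc by simp
  qed
  then show ?thesis using D1(2) by (metis nth_mem)
qed

lemma ear_from_exit:
  assumes C: "simple_cycle S C" and D2: "simple_cycle S D2"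
    and exit: "dt (hd D2) \<in> verts C" "fst (hd D2) \<notin> edges C"
  shows "\<exists>Q. ear S C Q"
proof -
  note b2 = simple_cycleD[OF D2(1)]
  define P where "P k \<longleftrightarrow> k < length D2 \<and> dh (D2 ! k) \<in> verts C" for k
  have "P (length D2 - 1)"
  proof -
    have "D2 ! (length D2 - 1) = last D2" using b2(1) by (simp add: last_conv_nth)
    then have "dh (D2 ! (length D2 - 1)) = dt (hd D2)" using b2(4) by (simp add: closed_iff)
    then show ?thesis using exit(1) b2(1) by (simp add: P_def)
  qed
  define k where "k = (LEAST k. P k)"
  have Pk: "P k" unfolding k_def using \<open>P (length D2 - 1)\<close> by (rule LeastI)
  have nP: "\<And>m. m < k \<Longrightarrow> \<not> P m" unfolding k_def by (rule not_less_Least)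
  define Q where "Q = take (Suc k) D2"
  have kl: "k < length D2" using Pk by (simp add: P_def)
  have Qn: "Q \<noteq> []" "length Q = Suc k" using kl by (cases D2, simp_all add: Q_def)+
  have wD2: "walk S D2" using D2(1) by (simp add: simple_cycle_def)
  have "ear S C Q" unfolding ear_def
  proof (intro conjI allI impI)
    show "simple_cycle S C" by (rule C)
    show "walk S Q" using wD2 Qn linked_take[OF b2(2), of "Suc k"]
      by (auto simp: walk_iff Q_def dest: in_set_takeD)
    show "non_backtracking Q" using non_backtracking_take[OF b2(3)] by (simp add: Q_def)
    show "distinct (map dt Q)" using D2(1) by (simp add: simple_cycle_def Q_def take_map[symmetric])
    show "dt (hd Q) \<in> verts C" using exit(1) b2(1) by (simp add: Q_def)
    have "last Q = Q ! k" using Qn by (simp add: last_conv_nth)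
    also have "\<dots> = D2 ! k" by (simp add: Q_def)
    finally have "last Q = D2 ! k" .
    then show "dh (last Q) \<in> verts C" using Pk by (simp add: P_def)
    show "fst (hd Q) \<notin> edges C" using exit(2) b2(1) by (simp add: Q_def)
  next
    fix j assume j: "0 < j \<and> j < length Q"
    then have "j - 1 < k" "Q ! j = D2 ! j" using Qn by (auto simp: Q_def)
    moreover have "dt (D2 ! j) = dh (D2 ! (j - 1))" using linked_nth[OF b2(2), of "j - 1"] j Qn kl by simp
    ultimately show "dt (Q ! j) \<notin> verts C" using nP[of "j - 1"] kl by (simp add: P_def)
  qed
  then show ?thesis by blast
qed

lemma ear_if_cycles_meet:
  assumes C: "simple_cycle S C" and D: "simple_cycle S D" and "\<not> edges D \<subseteq> edges C"
    and "verts C \<inter> verts D \<noteq> {}"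
  shows "\<exists>Q. ear S C Q"
proof -
  obtain d where d: "d \<in> set D" "dt d \<in> verts C" "fst d \<notin> edges C"
    using simple_cycle_exit[OF assms] by blast
  obtain D2 where "simple_cycle S D2" "hd D2 = d"
    using simple_cycle_start_at_dedge[OF D d(1)] by blast
  then show ?thesis using ear_from_exit[OF C] d(2,3) by blast
qed

lemma edge_leaving_cycle:
  assumes "simple_cycle E' C" "e \<in> E'" "e \<notin> edges C" "connected_graph V' E' tG hG"
    "\<forall>e\<in>E'. tG e \<in> V' \<and> hG e \<in> V'"
  shows "\<exists>d0. fst d0 \<in> E' \<and> fst d0 \<notin> edges C \<and> dt d0 \<in> verts C"
proof -
  have ex: "\<exists>d0. fst d0 \<in> E' \<and> fst d0 \<notin> edges C \<and> dt d0 \<in> verts C"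
    if "g \<in> E'" "g \<notin> edges C" "tG g \<in> verts C \<or> hG g \<in> verts C" for g
    using that
    by (metis dtail_def fst_conv snd_conv)
  show ?thesis
  proof (cases "tG e \<in> verts C \<or> hG e \<in> verts C")
    case True then show ?thesis using ex assms(2,3) by blast
  next
    case False
    have ne: "C \<noteq> []" using simple_cycleD(1)[OF assms(1)] .
    have r: "dt (hd C) \<in> verts C" using ne by (simp add: verts_def)
    have "fst (hd C) \<in> E'" using simple_cycleD(6)[OF assms(1)] ne by auto
    then have "dt (hd C) \<in> V'" using dtail_in[of "hd C" E' V'] assms(5) by blast
    then have "reach E' (dt (hd C)) (tG e)" using reach_if_connected[OF assms(4)] assms(2,5) by blast
    then obtain g where g: "g \<in> E'" "(tG g \<in> verts C \<and> hG g \<notin> verts C) \<or> (hG g \<in> verts C \<and> tG g \<notin> verts C)"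
      using crossing_edge[OF _ r] False by blast
    then have "g \<notin> edges C" using simple_cycle_edge_ends[OF assms(1)] by blast
    then show ?thesis using ex g by blast
  qed
qed

lemma cel_subgraph_not_cycle:
  assumes C: "simple_cycle E' C" and con: "connected_graph V' E' tG hG"
    and ends: "\<forall>e\<in>E'. tG e \<in> V' \<and> hG e \<in> V'" and chi: "int (card V') - int (card E') = -1"
  shows "\<exists>e. e \<in> E' \<and> e \<notin> edges C"
proof (rule ccontr)
  assume "\<not> ?thesis"
  moreover have ECs: "edges C \<subseteq> E'" using simple_cycleD(6)[OF C] .
  ultimately have EE: "E' = edges C" by blast
  have VCs: "verts C \<subseteq> V'"
    using dtail_in[of _ E' V'] ends ECs by (auto simp: verts_def)
  have r: "dt (hd C) \<in> verts C" using simple_cycleD(1)[OF C] by (simp add: verts_def)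
  have "v \<in> verts C" if v: "v \<in> V'" for v
  proof (rule ccontr)
    assume nv: "v \<notin> verts C"
    have "reach E' (dt (hd C)) v" using reach_if_connected[OF con] VCs r v by blast
    then obtain g where "g \<in> E'" "(tG g \<in> verts C \<and> hG g \<notin> verts C) \<or> (hG g \<in> verts C \<and> tG g \<notin> verts C)"
      using crossing_edge[OF _ r nv] by blast
    then show False using EE simple_cycle_edge_ends[OF C] by blast
  qed
  then have "V' = verts C" using VCs by blast
  then have "card V' = card E'" using EE simple_cycleD(8,9)[OF C] by simp
  then show False using chi by simp
qed

lemma cel_subgraph_cases:
  assumes cel: "(V', E') \<in> cel_subgraphs V E tG hG"
  shows "(\<exists>C Q. ear E' C Q \<and> ear_edges C Q = E' \<and> ear_verts C Q = V') \<or>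
         (\<exists>C P D. barbell_config E' C P D \<and> barbell_edges C P D = E' \<and> barbell_verts C P D = V')"
proof -
  note cf = cel_subgraphsD[OF cel]
  have sc: "extendable E'" using extendable_if_min_degree[OF cf(2,5,8)] .
  have "E' \<noteq> {}" using cf(7) by auto
  then obtain C where C: "simple_cycle E' C" using simple_cycle_if_extendable[OF cf(2) sc] by blast
  obtain e where e: "e \<in> E'" "e \<notin> edges C"
    using cel_subgraph_not_cycle[OF C cf(6,5,7)] by blast
  obtain d0 where d0: "fst d0 \<in> E'" "fst d0 \<notin> edges C" "dt d0 \<in> verts C"
    using edge_leaving_cycle[OF C e cf(6,5)] by blast
  from ear_or_barbell_config[OF cf(2) sc C d0] show ?thesis
  proof
    assume "\<exists>Q. ear E' C Q"
    then obtain Q where Q: "ear E' C Q" by blast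
    then have "ear_verts C Q = V' \<and> ear_edges C Q = E'"
      using cel_subgraph_maximal[OF cf(1,2) ear_verts_subset[OF Q cf(5)] ear_edges_subset[OF Q]
          _ cf(5,6,8) ear_euler_char[OF Q]] ear_edge_ends[OF Q] cf(7) by blast
    then show ?thesis using Q by blast
  next
    assume "\<exists>P D. barbell_config E' C P D"
    then obtain P D where B: "barbell_config E' C P D" by blast
    then have "barbell_verts C P D = V' \<and> barbell_edges C P D = E'"
      using cel_subgraph_maximal[OF cf(1,2) barbell_verts_subset[OF B cf(5)] barbell_edges_subset[OF B]
          _ cf(5,6,8) barbell_config_euler_char[OF B]] barbell_edge_ends[OF B] cf(7) by blast
    then show ?thesis using B by blast
  qed
qed

section \<open>Abelian walks on CEL subgraphs\<close>

definition joins :: "'e dedge list \<Rightarrow> 'e dedge list \<Rightarrow> bool" where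
  "joins X Y \<longleftrightarrow> dh (last X) = dt (hd Y) \<and> fst (last X) \<noteq> fst (hd Y)"

lemma walk_concat:
  assumes "Xs \<noteq> []" "\<forall>X\<in>set Xs. walk S X \<and> non_backtracking X" "successively joins Xs"
  shows "walk S (concat Xs) \<and> non_backtracking (concat Xs) \<and>
    hd (concat Xs) = hd (hd Xs) \<and> last (concat Xs) = last (last Xs)"
  using assms
proof (induction Xs rule: induct_list012)
  case (3 X Y Zs)
  then have IH: "walk S (concat (Y # Zs))" "non_backtracking (concat (Y # Zs))"
    "hd (concat (Y # Zs)) = hd Y" "last (concat (Y # Zs)) = last (last (Y # Zs))"
    by auto
  have "walk S X" "non_backtracking X" "joins X Y" "Y \<noteq> []" using "3.prems" by (auto simp: walk_iff)
  then show ?case using IH walk_append[of S X "concat (Y # Zs)"]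
    by (auto simp: joins_def non_backtracking_append walk_iff dinv_eq_iff)
qed (auto simp: walk_iff)

lemma abelian_walk_concat:
  assumes "Xs \<noteq> []" "\<forall>X\<in>set Xs. walk S X \<and> non_backtracking X"
    "successively joins Xs" "joins (last Xs) (hd Xs)"
    "\<And>d. count_list (concat Xs) d = count_list (concat Xs) (dinv d)"
  shows "abelian_walk S tG hG (concat Xs)"
proof -
  have "balanced (concat Xs)"
    unfolding balanced_def using assms(5)[of "(_, True)"] by (simp add: dinv_def)
  then show ?thesis using walk_concat[OF assms(1-3)] assms(4)
    by (auto simp: abelian_walk_def joins_def closed_iff)
qed

lemma abelian_walk_mono: "abelian_walk S tG hG W \<Longrightarrow> S \<subseteq> S' \<Longrightarrow> abelian_walk S' tG hG W"
  by (auto simp: abelian_walk_def is_walk_def)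

lemma ear_abelian_walk:
  assumes "ear S C Q"
  shows "\<exists>W. abelian_walk (ear_edges C Q) tG hG W \<and> length W = 2 * card (ear_edges C Q)"
proof -
  let ?H = "ear_edges C Q"
  have C: "simple_cycle S C" and Q: "walk ?H Q" "non_backtracking Q" "Q \<noteq> []"
    and ends: "dt (hd Q) \<in> verts C" "dh (last Q) \<in> verts C"
    using assms by (auto simp: ear_def ear_edges_def walk_iff)
  have disj: "edges Q \<inter> edges C = {}" using earD(4)[OF assms] .
  have sep: "fst x \<noteq> fst y" if "x \<in> set Q" "y \<in> set C" for x y
    using disj that by blast
  have card: "card ?H = length C + length Q" using card_ear_edges[OF assms] .
  have segment: "walk ?H X" "non_backtracking X" if "simple_cycle S (A @ B)" "set (A @ B) = set C"
    "X = A \<or> X = B" "X \<noteq> []" for A B X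
    using that by (auto simp: simple_cycle_def cyclically_non_backtracking_def walk_iff
        linked_append non_backtracking_append ear_edges_def)
  show ?thesis
  proof (cases "dt (hd Q) = dh (last Q)")
    case True
    obtain B where B: "simple_cycle S B" "set B = set C" "dt (hd B) = dt (hd Q)"
      "length B = length C"
      using simple_cycle_start_at[OF C ends(1)] by blast
    have "B \<noteq> []" "closed B" using B(1) by (auto simp: simple_cycle_def walk_iff)
    have sepB: "fst x \<noteq> fst y" if "x \<in> {hd Q, last Q}" "y \<in> {hd B, last B}" for x y
      using sep[of x y] that Q(3) \<open>B \<noteq> []\<close> unfolding B(2)[symmetric] by auto
    let ?Xs = "[Q, B, rev_walk Q, rev_walk B]"
    have "abelian_walk ?H tG hG (concat ?Xs)"
    proof (rule abelian_walk_concat)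
      show "\<forall>X\<in>set ?Xs. walk ?H X \<and> non_backtracking X"
        using Q segment[of "[]" B B] B \<open>B \<noteq> []\<close> by auto
      show "successively joins ?Xs" "joins (last ?Xs) (hd ?Xs)"
        using True B(2,3) \<open>B \<noteq> []\<close> \<open>closed B\<close> Q(3)
          sepB[of "hd Q" "last B"] sepB[of "last Q" "hd B"] sepB[of "last Q" "last B"]
          sepB[of "hd Q" "hd B"]
        by (simp_all add: joins_def hd_last_rev_walk closed_iff)
      show "count_list (concat ?Xs) d = count_list (concat ?Xs) (dinv d)" for d
        unfolding concat.simps append_Nil2 count_list_append count_list_rev_walk dinv_simps(1)
        by linarith
    qed simp
    then show ?thesis using card B(4) by (intro exI[of _ "concat ?Xs"]) simp
  next
    case False
    obtain A B where AB: "simple_cycle S (A @ B)" "set (A @ B) = set C" "length (A @ B) = length C"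
      "A \<noteq> []" "B \<noteq> []" "dt (hd A) = dt (hd Q)" "dh (last A) = dh (last Q)"
      "dt (hd B) = dh (last Q)" "dh (last B) = dt (hd Q)"
      using simple_cycle_split[OF C ends False] .
    have "distinct (map fst (A @ B))" using simple_cycleD(5)[OF AB(1)] .
    then have sepAB: "fst x \<noteq> fst y" if "x \<in> set A" "y \<in> set B" for x y
      using that by auto
    have sepQ: "fst x \<noteq> fst y" if "x \<in> set Q" "y \<in> set A \<or> y \<in> set B" for x y
      using sep[of x y] that AB(2) by auto
    let ?Xs = "[A, rev_walk Q, rev_walk B, rev_walk A, Q, B]"
    have "abelian_walk ?H tG hG (concat ?Xs)"
    proof (rule abelian_walk_concat)
      show "\<forall>X\<in>set ?Xs. walk ?H X \<and> non_backtracking X"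
        using Q segment[OF AB(1,2)] AB(4,5) by auto
      show "successively joins ?Xs" "joins (last ?Xs) (hd ?Xs)"
        using AB(4-9) Q(3) sepAB[of "last A" "hd B"] sepAB[of "hd A" "last B"]
          sepQ[of "last Q" "last A"] sepQ[of "hd Q" "last B"] sepQ[of "hd Q" "hd A"]
          sepQ[of "last Q" "hd B"]
        by (simp_all add: joins_def hd_last_rev_walk)
      show "count_list (concat ?Xs) d = count_list (concat ?Xs) (dinv d)" for d
        unfolding concat.simps append_Nil2 count_list_append count_list_rev_walk dinv_simps(1)
        by linarith
    qed simp
    then show ?thesis using card AB(3) by (intro exI[of _ "concat ?Xs"]) simp
  qed
qed

lemma barbell_abelian_walk:
  assumes "barbell_decomp V0 E0 tG hG w1 w2 b"
  shows "\<exists>W. abelian_walk E0 tG hG W \<and> length W = 2 * length w1 + 2 * length w2 + 4 * length b"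
proof -
  have walks: "walk E0 X" "non_backtracking X" "X \<noteq> []" if "X \<in> {w1, w2, b}" for X
    using assms that by (auto simp: barbell_decomp_def is_cycle_def is_path_def walk_iff)
  have cl: "dh (last w1) = dt (hd w1)" "dh (last w2) = dt (hd w2)"
    and x: "dt (hd b) = dt (hd w1)" and y: "dh (last b) = dt (hd w2)"
    using assms by (auto simp: barbell_decomp_def is_cycle_def closed_iff)
  have "edges w1 \<inter> edges b = {}" "edges w2 \<inter> edges b = {}"
    using assms by (auto simp: barbell_decomp_def walk_edges_def)
  then have sep: "fst (hd w1) \<noteq> fst (hd b)" "fst (last w1) \<noteq> fst (hd b)"
    "fst (hd w2) \<noteq> fst (last b)" "fst (last w2) \<noteq> fst (last b)"
    using walks(3) by (blast intro: hd_in_set last_in_set)+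
  let ?Xs = "[w1, b, w2, rev_walk b, rev_walk w1, b, rev_walk w2, rev_walk b]"
  have "abelian_walk E0 tG hG (concat ?Xs)"
  proof (rule abelian_walk_concat)
    show "\<forall>X\<in>set ?Xs. walk E0 X \<and> non_backtracking X" using walks by auto
    show "successively joins ?Xs" "joins (last ?Xs) (hd ?Xs)"
      using cl x y walks(3) sep by (simp_all add: joins_def hd_last_rev_walk)
    show "count_list (concat ?Xs) d = count_list (concat ?Xs) (dinv d)" for d
      unfolding concat.simps append_Nil2 count_list_append count_list_rev_walk dinv_simps(1)
      by linarith
  qed simp
  then show ?thesis by (intro exI[of _ "concat ?Xs"]) simp
qed

lemma sum_barbell_weights:
  assumes "barbell_decomp V0 E0 tG hG w1 w2 b"
  shows "(\<Sum>e\<in>E0. if e \<in> walk_edges b then 4 else 2) = 2 * length w1 + 2 * length w2 + (4::nat) * length b"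
proof -
  have d: "distinct (map fst w1)" "distinct (map fst w2)" "distinct (map fst b)"
    and d12: "edges w1 \<inter> edges w2 = {}" and d1b: "edges w1 \<inter> edges b = {}" and d2b: "edges w2 \<inter> edges b = {}"
    and E: "E0 = edges w1 \<union> edges w2 \<union> edges b"
    using assms by (auto simp: barbell_decomp_def walk_edges_def is_cycle_def is_path_def)
  have cards: "card (edges w1) = length w1" "card (edges w2) = length w2" "card (edges b) = length b"
    using distinct_card[OF d(1)] distinct_card[OF d(2)] distinct_card[OF d(3)] by simp_all
  let ?f = "\<lambda>e. if e \<in> walk_edges b then 4 else (2::nat)"
  have "sum ?f E0 = sum ?f (edges w1 \<union> edges w2) + sum ?f (edges b)"
    unfolding E using d12 d1b d2b by (subst sum.union_disjoint) auto
  also have "sum ?f (edges w1 \<union> edges w2) = sum ?f (edges w1) + sum ?f (edges w2)"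
    using d12 by (subst sum.union_disjoint) auto
  also have "sum ?f (edges w1) = 2 * length w1"
  proof -
    have "sum ?f (edges w1) = sum (\<lambda>_. 2) (edges w1)"
      using d1b by (intro sum.cong refl) (auto simp: walk_edges_def)
    then show ?thesis using cards(1) by simp
  qed
  also have "sum ?f (edges w2) = 2 * length w2"
  proof -
    have "sum ?f (edges w2) = sum (\<lambda>_. 2) (edges w2)"
      using d2b by (intro sum.cong refl) (auto simp: walk_edges_def)
    then show ?thesis using cards(2) by simp
  qed
  also have "sum ?f (edges b) = 4 * length b"
  proof -
    have "sum ?f (edges b) = sum (\<lambda>_. 4) (edges b)"
      by (intro sum.cong refl) (auto simp: walk_edges_def)
    then show ?thesis using cards(3) by simp
  qed
  finally show ?thesis .
qed

lemma Abl_le_length: "abelian_walk E tG hG W \<Longrightarrow> Abl E tG hG \<le> enat (length W)"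
  unfolding Abl_def by (rule Inf_lower) blast

lemma bar_edges_decomp:
  assumes "is_barbell V0 E0 tG hG"
  obtains w1 w2 b where "barbell_decomp V0 E0 tG hG w1 w2 b" "bar_edges V0 E0 tG hG = walk_edges b"
proof -
  let ?b = "SOME b. \<exists>w1 w2. barbell_decomp V0 E0 tG hG w1 w2 b"
  have "\<exists>w1 w2. barbell_decomp V0 E0 tG hG w1 w2 ?b"
    using assms unfolding is_barbell_def by (metis (mono_tags, lifting) someI_ex)
  then show thesis using that assms by (auto simp: bar_edges_def)
qed

lemma barbell_abelian_walk_l_Abl:
  assumes "is_barbell V0 E0 tG hG"
  shows "\<exists>W. abelian_walk E0 tG hG W \<and> length W = l_Abl V0 E0 tG hG"
proof -
  obtain w1 w2 b where dec: "barbell_decomp V0 E0 tG hG w1 w2 b"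
    and bar: "bar_edges V0 E0 tG hG = walk_edges b"
    using bar_edges_decomp[OF assms] .
  have "l_Abl V0 E0 tG hG = 2 * length w1 + 2 * length w2 + 4 * length b"
    using sum_barbell_weights[OF dec] bar by (simp add: l_Abl_def)
  then show ?thesis using barbell_abelian_walk[OF dec] by simp
qed

lemma cel_subgraph_abelian_walk:
  assumes "(V', E') \<in> cel_subgraphs V E tG hG"
  shows "\<exists>W. abelian_walk E' tG hG W \<and> length W = l_Abl V' E' tG hG"
proof (cases "is_barbell V' E' tG hG")
  case True
  then show ?thesis by (rule barbell_abelian_walk_l_Abl)
next
  case False
  then obtain C Q where "ear E' C Q" "ear_edges C Q = E'"
    using cel_subgraph_cases[OF assms] is_barbell_if_barbell_config by metis
  moreover have "l_Abl V' E' tG hG = 2 * card E'" using False by (simp add: l_Abl_def bar_edges_def)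
  ultimately show ?thesis using ear_abelian_walk by metis
qed

lemma Abl_le_l_Abl:
  assumes "(V', E') \<in> cel_subgraphs V E tG hG"
  shows "Abl E tG hG \<le> enat (l_Abl V' E' tG hG)"
  using cel_subgraph_abelian_walk[OF assms] cel_subgraphsD(4)[OF assms]
  by (metis Abl_le_length abelian_walk_mono)

section \<open>Bars are bridges\<close>

lemma barbell_decomp_tight:
  assumes "finite V0" "finite E0" "int (card V0) - int (card E0) = -1"
    and "barbell_decomp V0 E0 tG hG w1 w2 b"
  shows "dt ` set w1 \<inter> dt ` set w2 = {}" "set (vertex_seq b) \<inter> dt ` set w1 \<subseteq> {dt (hd b)}"
    "set (vertex_seq b) \<inter> dt ` set w2 \<subseteq> {dh (last b)}" "distinct (vertex_seq b)"
proof -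
  have c1: "linked w1" "closed w1" "w1 \<noteq> []" "distinct (map fst w1)"
    and c2: "linked w2" "closed w2" "w2 \<noteq> []" "distinct (map fst w2)"
    and pb: "linked b" "b \<noteq> []" "distinct (map fst b)" "dt (hd b) \<noteq> dh (last b)"
    and d12: "edges w1 \<inter> edges w2 = {}" and d1b: "edges w1 \<inter> edges b = {}"
    and d2b: "edges w2 \<inter> edges b = {}"
    and x: "dt (hd b) = dt (hd w1)" and y: "dh (last b) = dt (hd w2)"
    and E: "E0 = edges w1 \<union> edges w2 \<union> edges b"
    and V: "V0 = walk_vertices tG hG w1 \<union> walk_vertices tG hG w2 \<union> walk_vertices tG hG b"
    using assms(4) by (auto simp: barbell_decomp_def walk_edges_def is_cycle_def is_path_def walk_iff)
  define V1 where "V1 = dt ` set w1"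
  define V2 where "V2 = dt ` set w2"
  define Vb where "Vb = set (vertex_seq b)"
  let ?U = "V1 \<union> V2"
  have "walk_vertices tG hG w1 = V1" "walk_vertices tG hG w2 = V2" "walk_vertices tG hG b = Vb"
    using closed_heads_eq_tails[OF c1(1-3)] closed_heads_eq_tails[OF c2(1-3)] set_vertex_seq[OF pb(2,1)]
    by (auto simp: walk_vertices_def V1_def V2_def Vb_def)
  then have V0: "V0 = ?U \<union> Vb" using V by simp
  have k1: "card V1 \<le> length w1" and k2: "card V2 \<le> length w2"
    unfolding V1_def V2_def by (metis card_image_le card_length finite_set le_trans length_map set_map)+
  have kb: "card Vb \<le> Suc (length b)"
    unfolding Vb_def using card_length[of "vertex_seq b"] length_vertex_seq[of b] by simp
  have "card (edges w1 \<union> edges w2) = length w1 + length w2"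
    using d12 distinct_card[OF c1(4)] distinct_card[OF c2(4)] by (subst card_Un_disjoint) auto
  then have cE: "card E0 = length w1 + length w2 + length b"
    unfolding E using d1b d2b distinct_card[OF pb(3)] by (subst card_Un_disjoint) auto
  have fV: "finite V1" "finite V2" "finite Vb" by (simp_all add: V1_def V2_def Vb_def)
  have "dt (hd b) \<in> Vb" "dh (last b) \<in> Vb" using pb(2) by (auto simp: Vb_def vertex_seq_def)
  moreover have x1: "dt (hd b) \<in> V1" and y2: "dh (last b) \<in> V2"
    using x y c1(3) c2(3) by (auto simp: V1_def V2_def)
  ultimately have xy: "{dt (hd b), dh (last b)} \<subseteq> ?U \<inter> Vb" by blast
  have "card {dt (hd b), dh (last b)} \<le> card (?U \<inter> Vb)" using xy fV by (intro card_mono) auto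
  then have "2 \<le> card (?U \<inter> Vb)" using pb(4) by simp
  moreover have "card ?U + card (V1 \<inter> V2) = card V1 + card V2" using card_Un_Int[OF fV(1,2)] by simp
  moreover have "card (?U \<union> Vb) + card (?U \<inter> Vb) = card ?U + card Vb"
    using card_Un_Int[of ?U Vb] fV by simp
  moreover have "card V0 = card (?U \<union> Vb)" using V0 by simp
  ultimately have eqs: "card (V1 \<inter> V2) = 0" "card (?U \<inter> Vb) = 2" "card Vb = Suc (length b)"
    using assms(3) cE k1 k2 kb by linarith+
  have V12: "V1 \<inter> V2 = {}" using eqs(1) fV by simp
  have "finite (?U \<inter> Vb)" using fV by simp
  then have "?U \<inter> Vb = {dt (hd b), dh (last b)}"
    using xy eqs(2) pb(4) by (metis card_2_iff card_subset_eq finite_insert)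
  then have "Vb \<inter> V1 \<subseteq> {dt (hd b)}" "Vb \<inter> V2 \<subseteq> {dh (last b)}" using V12 x1 y2 by blast+
  then show "dt ` set w1 \<inter> dt ` set w2 = {}" "set (vertex_seq b) \<inter> dt ` set w1 \<subseteq> {dt (hd b)}"
    "set (vertex_seq b) \<inter> dt ` set w2 \<subseteq> {dh (last b)}"
    using V12 by (simp_all add: V1_def V2_def Vb_def)
  show "distinct (vertex_seq b)"
    using eqs(3) length_vertex_seq[of b] card_distinct[of "vertex_seq b"] by (simp add: Vb_def)
qed

lemma bar_edge_bridge:
  assumes fin: "finite V0" "finite E0" and chi: "int (card V0) - int (card E0) = -1"
    and dec: "barbell_decomp V0 E0 tG hG w1 w2 b" and f: "f \<in> walk_edges b"
  shows "\<not> reach (E0 - {f}) (tG f) (hG f)"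
proof -
  have c1: "linked w1" "closed w1" "w1 \<noteq> []" and c2: "linked w2" "closed w2" "w2 \<noteq> []"
    and pb: "linked b" "b \<noteq> []" and E: "E0 = edges w1 \<union> edges w2 \<union> edges b"
    using dec by (auto simp: barbell_decomp_def walk_edges_def is_cycle_def is_path_def walk_iff)
  note tight = barbell_decomp_tight[OF fin chi dec]
  let ?vs = "vertex_seq b"
  obtain k where k: "k < length b" "fst (b ! k) = f" using f by (auto simp: walk_edges_def in_set_conv_nth)
  define S where "S = dt ` set w1 \<union> (\<lambda>i. ?vs ! i) ` {..k}"
  have vinj: "i = j" if "i \<le> length b" "j \<le> length b" "?vs ! i = ?vs ! j" for i j
    using that tight(4) length_vertex_seq[of b] by (metis less_Suc_eq_le nth_eq_iff_index_eq)
  have vin: "?vs ! i \<in> set ?vs" if "i \<le> length b" for i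
    using that length_vertex_seq[of b] by simp
  have v0: "?vs ! 0 = dt (hd b)" using pb(2) by (simp add: vertex_seq_nth hd_conv_nth)
  have idx: "?vs ! j \<in> S \<longleftrightarrow> j \<le> k" if "j \<le> length b" for j
  proof
    assume "?vs ! j \<in> S"
    then consider "?vs ! j \<in> dt ` set w1" | i where "i \<le> k" "?vs ! j = ?vs ! i"
      unfolding S_def by blast
    then show "j \<le> k"
    proof cases
      case 1 then show ?thesis using tight(2) vin[OF that] v0 vinj[OF that, of 0] by auto
    next
      case 2 then show ?thesis using vinj[OF that, of i] k(1) by simp
    qed
  qed (auto simp: S_def)
  have w2_off: "v \<notin> S" if "v \<in> dt ` set w2" for v
  proof
    assume "v \<in> S"
    then consider "v \<in> dt ` set w1" | i where "i \<le> k" "v = ?vs ! i" unfolding S_def by blast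
    then show False
    proof cases
      case 1 then show False using tight(1) that by blast
    next
      case 2
      then have "?vs ! i = ?vs ! length b" using tight(3) vin[of i] that k(1) vertex_seq_last by auto
      then show False using vinj[of i "length b"] 2 k(1) by simp
    qed
  qed
  have inv: "\<forall>e\<in>E0 - {f}. (tG e \<in> S \<longleftrightarrow> hG e \<in> S)"
  proof
    fix e assume e: "e \<in> E0 - {f}"
    then consider "e \<in> edges w1" | "e \<in> edges w2" | "e \<in> edges b" using E by blast
    then show "tG e \<in> S \<longleftrightarrow> hG e \<in> S"
    proof cases
      case 1 then show ?thesis using closed_edge_ends[OF c1] by (auto simp: S_def)
    next
      case 2 then show ?thesis using closed_edge_ends[OF c2] w2_off by blast
    next
      case 3
      then obtain j where j: "j < length b" "fst (b ! j) = e" by (auto simp: in_set_conv_nth)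
      have "j \<noteq> k" using e j k by auto
      have "{tG e, hG e} = {?vs ! j, ?vs ! Suc j}"
        using ends_dedge[of "b ! j"] j vertex_seq_nth[OF j(1)] dhead_vertex_seq[OF pb(1) j(1)] by simp
      moreover have "?vs ! j \<in> S \<longleftrightarrow> ?vs ! Suc j \<in> S"
        using idx[of j] idx[of "Suc j"] j(1) \<open>j \<noteq> k\<close> by (simp add: Suc_le_eq nat_less_le)
      ultimately show ?thesis by (metis doubleton_eq_iff)
    qed
  qed
  have "dt (b ! k) \<in> S" "dh (b ! k) \<notin> S"
    using idx[of k] idx[of "Suc k"] k(1) vertex_seq_nth[OF k(1)] dhead_vertex_seq[OF pb(1) k(1)] by auto
  then show ?thesis using not_reach_across_cut[OF inv] k(2) by blast
qed

lemma bar_edges_subset: "bar_edges V0 E0 tG hG \<subseteq> E0"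
proof (cases "is_barbell V0 E0 tG hG")
  case True
  then obtain w1 w2 b where "barbell_decomp V0 E0 tG hG w1 w2 b" "bar_edges V0 E0 tG hG = walk_edges b"
    by (rule bar_edges_decomp)
  then show ?thesis by (auto simp: barbell_decomp_def)
qed (simp add: bar_edges_def)

lemma bar_edges_bridge:
  assumes "finite V0" "finite E0" "int (card V0) - int (card E0) = -1"
    and "f \<in> bar_edges V0 E0 tG hG"
  shows "\<not> reach (E0 - {f}) (tG f) (hG f)"
proof -
  have "is_barbell V0 E0 tG hG" using assms(4) by (auto simp: bar_edges_def split: if_splits)
  then obtain w1 w2 b where "barbell_decomp V0 E0 tG hG w1 w2 b" "bar_edges V0 E0 tG hG = walk_edges b"
    by (rule bar_edges_decomp)
  then show ?thesis using bar_edge_bridge[OF assms(1-3)] assms(4) by simp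
qed

lemma ear_not_barbell:
  assumes "ear S C Q"
  shows "\<not> is_barbell (ear_verts C Q) (ear_edges C Q) tG hG"
proof
  assume "is_barbell (ear_verts C Q) (ear_edges C Q) tG hG"
  then obtain w1 w2 b where dec: "barbell_decomp (ear_verts C Q) (ear_edges C Q) tG hG w1 w2 b"
    and bar: "bar_edges (ear_verts C Q) (ear_edges C Q) tG hG = walk_edges b"
    by (rule bar_edges_decomp)
  have "b \<noteq> []" using dec by (auto simp: barbell_decomp_def is_path_def walk_iff)
  then have f: "fst (hd b) \<in> bar_edges (ear_verts C Q) (ear_edges C Q) tG hG"
    using bar by (simp add: walk_edges_def)
  then show False
    using bar_edges_bridge[OF finite_ear ear_euler_char[OF assms] f]
      ear_nonbridge[OF assms] bar_edges_subset by blast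
qed

section \<open>Shortest abelian walks\<close>

definition shortest_abelian :: "'e set \<Rightarrow> 'e dedge list \<Rightarrow> bool" where
  "shortest_abelian E w \<longleftrightarrow> abelian_walk E tG hG w \<and> (\<forall>w'. abelian_walk E tG hG w' \<longrightarrow> length w \<le> length w')"

lemma balanced_dinv_mem: "balanced w \<Longrightarrow> d \<in> set w \<Longrightarrow> dinv d \<in> set w"
  using balanced_dinv[of w d] by (metis count_list_0_iff)

lemma balanced_edge_mem: "balanced w \<Longrightarrow> fst d \<in> edges w \<Longrightarrow> d \<in> set w"
proof -
  assume b: "balanced w" "fst d \<in> edges w"
  then obtain d' where d': "d' \<in> set w" "fst d' = fst d" by auto
  from fst_eq_dedge_cases[OF d'(2)] show ?thesis
  proof
    assume "d' = dinv d" then show ?thesis using balanced_dinv_mem[OF b(1), of d'] d' by simp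
  qed (use d' in simp)
qed

lemma two_le_traversals:
  assumes "balanced w" "e \<in> edges w"
  shows "2 \<le> traversals w e"
proof -
  have "(e, True) \<in> set w" using balanced_edge_mem[OF assms(1), of "(e, True)"] assms(2) by simp
  then have "count_list w (e, True) \<noteq> 0" by (simp add: count_list_0_iff)
  moreover have "count_list w (e, True) = count_list w (e, False)"
    using assms(1) by (simp add: balanced_def)
  ultimately show ?thesis by (simp add: traversals_def)
qed

lemma balanced_strip_ends:
  assumes "balanced (a # u @ [dinv a])"
  shows "balanced u"
  unfolding balanced_def
proof
  fix e
  have "count_list (a # u @ [dinv a]) (e, True) = count_list (a # u @ [dinv a]) (e, False)"
    using assms by (simp add: balanced_def)
  moreover have "a = (e, True) \<longleftrightarrow> dinv a = (e, False)" "a = (e, False) \<longleftrightarrow> dinv a = (e, True)"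
    by (metis dinv_Pair dinv_simps(1))+
  ultimately show "count_list u (e, True) = count_list u (e, False)"
    by (auto split: if_splits)
qed

lemma shortest_abelian_last_ne_dinv_hd:
  assumes "shortest_abelian E w"
  shows "last w \<noteq> dinv (hd w)"
proof
  assume eq: "last w = dinv (hd w)"
  have a: "walk E w" "closed w" "non_backtracking w" "balanced w" using assms by (auto simp: shortest_abelian_def abelian_walk_def)
  have ne: "w \<noteq> []" using a(1) by (simp add: walk_iff)
  obtain x u where xu: "w = x # u" using ne by (cases w) auto
  have "u \<noteq> []" using eq xu by auto
  then obtain v where uv: "u = v @ [last u]" by (metis append_butlast_last_id)
  have lu: "last u = dinv x" using eq xu \<open>u \<noteq> []\<close> by simp
  have w: "w = x # v @ [dinv x]" using xu uv lu by simp
  have "v \<noteq> []"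
  proof
    assume "v = []"
    then have "non_backtracking [x, dinv x]" using a(3) w by simp
    then show False by simp
  qed
  have ch: "linked w" using a(1) by (simp add: walk_iff)
  have c1: "linked ((x # v) @ [dinv x])" using ch w by simp
  have c2: "linked (x # (v @ [dinv x]))" using ch w by simp
  have chv: "linked (x # v)" "linked (v @ [dinv x])"
    using linked_append[of "x # v" "[dinv x]"] c1 linked_Cons[of x "v @ [dinv x]"] c2 by auto
  have "abelian_walk E tG hG v"
    unfolding abelian_walk_def
  proof (intro conjI)
    show "walk E v" using a(1) w \<open>v \<noteq> []\<close> chv by (auto simp: walk_iff linked_append linked_Cons)
    show "closed v" using chv \<open>v \<noteq> []\<close> by (simp add: closed_iff linked_append linked_Cons)
    show "non_backtracking v" using a(3) w by (simp add: non_backtracking_append non_backtracking_Cons)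
    show "balanced v" using balanced_strip_ends a(4) w by simp
  qed
  then have "length w \<le> length v" using assms by (simp add: shortest_abelian_def)
  then show False using w by simp
qed

lemma shortest_abelian_swap:
  assumes "shortest_abelian E (xs @ ys)"
  shows "shortest_abelian E (ys @ xs)"
proof -
  have w: "walk E (xs @ ys)" "closed (xs @ ys)" "balanced (xs @ ys)"
    "cyclically_non_backtracking (xs @ ys)"
    using assms shortest_abelian_last_ne_dinv_hd[OF assms]
    by (auto simp: shortest_abelian_def abelian_walk_def cyclically_non_backtracking_def)
  have "abelian_walk E tG hG (ys @ xs)"
    using w linked_closed_swap[of xs ys] cyclically_non_backtracking_swap[OF w(4)]
    by (auto simp: abelian_walk_def walk_iff balanced_def cyclically_non_backtracking_def
        add.commute)
  then show ?thesis using assms by (simp add: shortest_abelian_def add.commute)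
qed

lemma shortest_abelian_continues:
  assumes "shortest_abelian E w" "d \<in> set w"
  shows "\<exists>d'\<in>set w. dt d' = dh d \<and> d' \<noteq> dinv d"
proof -
  have a: "walk E w" "closed w" "non_backtracking w" using assms by (auto simp: shortest_abelian_def abelian_walk_def)
  have ch: "linked w" using a(1) by (simp add: walk_iff)
  obtain i where i: "i < length w" "w ! i = d" using assms(2) by (meson in_set_conv_nth)
  show ?thesis
  proof (cases "Suc i < length w")
    case True
    then show ?thesis using linked_nth[OF ch True] non_backtracking_nth[OF a(3) True] i
      by (metis nth_mem)
  next
    case False
    then have "i = length w - 1" using i by simp
    then have "d = last w" using i by (metis last_conv_nth list.size(3) not_less_zero)
    moreover have "hd w \<in> set w" using i by (cases w) auto
    moreover have "hd w \<noteq> dinv (last w)" using shortest_abelian_last_ne_dinv_hd[OF assms(1)] by (metis dinv_simps(1))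
    ultimately show ?thesis using a(2) by (metis closed_iff)
  qed
qed

lemma extendable_shortest_abelian:
  assumes "shortest_abelian E w"
  shows "extendable (edges w)"
  unfolding extendable_def
proof (intro allI impI)
  fix d :: "'e dedge" assume "fst d \<in> edges w"
  moreover have b: "balanced w" using assms by (simp add: shortest_abelian_def abelian_walk_def)
  ultimately have "d \<in> set w" using balanced_edge_mem by blast
  then show "\<exists>d'. fst d' \<in> edges w \<and> dt d' = dh d \<and> d' \<noteq> dinv d"
    using shortest_abelian_continues[OF assms] by fastforce
qed

lemma simple_cycle_dinv_disjoint:
  assumes "simple_cycle S C"
  shows "set C \<inter> dinv ` set C = {}"
proof (rule ccontr)
  assume "set C \<inter> dinv ` set C \<noteq> {}"
  then obtain y where "dinv y \<in> set C" "y \<in> set C" by blast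
  then obtain i j where ij: "i < length C" "j < length C" "C ! i = dinv (C ! j)"
    by (metis in_set_conv_nth)
  then have "fst (C ! i) = fst (C ! j)" by simp
  then have "i = j" using distinct_map_nth_inj[OF simple_cycleD(5)[OF assms] ij(1,2)] by simp
  then show False using ij(3) by simp
qed

lemma walk_within_cycle_one_direction:
  assumes "simple_cycle S C" "linked w" "non_backtracking w" "w \<noteq> []" "edges w \<subseteq> edges C"
  shows "set w \<subseteq> set C \<or> set w \<subseteq> dinv ` set C"
proof -
  have inC: "\<And>i. i < length w \<Longrightarrow> fst (w ! i) \<in> edges C" using assms(5) by (metis image_subset_iff nth_mem)
  have all: "set w \<subseteq> F" if F: "F = set C \<or> F = dinv ` set C" "w ! 0 \<in> F" for F
  proof -
    have "w ! i \<in> F" if "i < length w" for i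
      using that
    proof (induction i)
      case 0 then show ?case using F by simp
    next
      case (Suc i)
      have p: "fst (w ! Suc i) \<in> edges C" "dt (w ! Suc i) = dh (w ! i)" "w ! Suc i \<noteq> dinv (w ! i)"
        using inC[OF Suc.prems] linked_nth[OF assms(2) Suc.prems] non_backtracking_nth[OF assms(3) Suc.prems]
        by auto
      have "w ! i \<in> F" using Suc by simp
      then show ?case
        using F(1) simple_cycle_step[OF assms(1) _ p] simple_cycle_step_rev[OF assms(1) _ p] by blast
    qed
    then show ?thesis by (metis in_set_conv_nth subsetI)
  qed
  obtain m where m: "m < length C" "fst (C ! m) = fst (w ! 0)" using inC[of 0] assms(4)
    by (auto simp: in_set_conv_nth)
  then have "w ! 0 \<in> set C \<or> w ! 0 \<in> dinv ` set C"
    using fst_eq_dedge_cases[OF m(2)] nth_mem[OF m(1)] by (metis dinv_simps(1) image_eqI)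
  then show ?thesis using all by blast
qed

lemma not_balanced_within_cycle:
  assumes "simple_cycle S C" "linked w" "non_backtracking w" "w \<noteq> []" "edges w \<subseteq> edges C"
  shows "\<not> balanced w"
proof
  assume "balanced w"
  then have "hd w \<in> set w" "dinv (hd w) \<in> set w"
    using hd_in_set[OF assms(4)] balanced_dinv_mem by blast+
  note disj = simple_cycle_dinv_disjoint[OF assms(1)]
  from walk_within_cycle_one_direction[OF assms] show False
  proof
    assume "set w \<subseteq> set C"
    then have "dinv (hd w) \<in> set C \<inter> dinv ` set C" using \<open>hd w \<in> set w\<close> \<open>dinv (hd w) \<in> set w\<close> by blast
    then show False using disj by blast
  next
    assume "set w \<subseteq> dinv ` set C"
    then have "hd w \<in> dinv ` set C" "dinv (hd w) \<in> dinv ` set C"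
      using \<open>hd w \<in> set w\<close> \<open>dinv (hd w) \<in> set w\<close> by blast+
    moreover from this(2) have "hd w \<in> set C" by (metis dinv_simps(1) imageE)
    ultimately show False using disj by blast
  qed
qed

lemma shortest_abelian_single_pass:
  assumes m: "shortest_abelian E w" and e: "e \<in> edges w" and lt: "traversals w e < 4"
  obtains X Y where "shortest_abelian E ((e, True) # X @ (e, False) # Y)"
    "set ((e, True) # X @ (e, False) # Y) = set w" "e \<notin> edges X" "e \<notin> edges Y" "X \<noteq> []" "Y \<noteq> []"
proof -
  have bal: "balanced w" using m by (simp add: shortest_abelian_def abelian_walk_def)
  have "(e, True) \<in> set w" using balanced_edge_mem[OF bal, of "(e, True)"] e by simp
  then have "count_list w (e, True) \<noteq> 0" by (simp add: count_list_0_iff)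
  moreover have "count_list w (e, True) = count_list w (e, False)" using bal by (simp add: balanced_def)
  ultimately have c1: "count_list w (e, True) = Suc 0" "count_list w (e, False) = Suc 0"
    using lt by (simp_all add: traversals_def)
  obtain pre rest where pr: "w = pre @ (e, True) # rest" "count_list rest (e, True) = 0"
    using count_list_Suc_split_first[OF c1(1)] by blast
  have crp: "count_list (rest @ pre) (e, False) = Suc 0" "count_list (rest @ pre) (e, True) = 0"
    using c1 pr by simp_all
  obtain X Y where XY: "rest @ pre = X @ (e, False) # Y" "(e, False) \<notin> set X"
    "count_list Y (e, False) = 0"
    using count_list_Suc_split_first[OF crp(1)] by blast
  let ?W = "(e, True) # X @ (e, False) # Y"
  have m1: "shortest_abelian E ?W"
    using shortest_abelian_swap[of E pre "(e, True) # rest"] m pr XY(1) by simp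
  have "(e, True) \<notin> set X" "(e, True) \<notin> set Y" "(e, False) \<notin> set Y"
    using crp(2) XY by (simp_all add: count_list_0_iff)
  then have "d \<notin> set X \<and> d \<notin> set Y" if "fst d = e" for d
    using that XY(2) by (cases d, cases "snd d") auto
  then have "e \<notin> edges X" "e \<notin> edges Y" by blast+
  moreover have "set ?W = set w" unfolding pr(1) XY(1)[symmetric] by auto
  moreover have "X \<noteq> []"
  proof
    assume "X = []"
    then have "non_backtracking ((e, True) # (e, False) # Y)"
      using m1 by (simp add: shortest_abelian_def abelian_walk_def)
    then show False by (simp add: dinv_Pair)
  qed
  moreover have "Y \<noteq> []" using shortest_abelian_last_ne_dinv_hd[OF m1] by (auto simp: dinv_Pair)
  ultimately show thesis using that m1 by blast
qed

lemma four_le_traversals_bridge: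
  assumes m: "shortest_abelian E w" and e: "e \<in> edges w" and br: "\<not> reach (edges w - {e}) (tG e) (hG e)"
  shows "4 \<le> traversals w e"
proof (rule ccontr)
  assume "\<not> 4 \<le> traversals w e"
  then obtain X Y where m1: "shortest_abelian E ((e, True) # X @ (e, False) # Y)"
    and sw: "set ((e, True) # X @ (e, False) # Y) = set w" and off: "e \<notin> edges X" "e \<notin> edges Y"
    and ne: "X \<noteq> []" "Y \<noteq> []"
    using shortest_abelian_single_pass[OF m e] by (metis not_le)
  let ?W = "(e, True) # X @ (e, False) # Y"
  have a1: "walk E ?W" "closed ?W" "non_backtracking ?W" "balanced ?W"
    using m1 by (auto simp: shortest_abelian_def abelian_walk_def)
  have ends: "dh (e, True) = hG e" "dt (e, True) = tG e" "dt (e, False) = hG e" "dh (e, False) = tG e"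
    by (simp_all add: dtail_def dhead_def)
  have "linked ?W" using a1(1) by (simp add: walk_iff)
  then have "linked X" "linked Y" "dh (e, True) = dt (hd X)" "dh (last X) = dt (e, False)"
    "dh (e, False) = dt (hd Y)"
    using ne by (simp_all add: linked_append linked_Cons)
  then have lk: "linked X" "linked Y" "dt (hd X) = hG e" "dh (last X) = hG e" "dt (hd Y) = tG e"
    using ends by simp_all
  have wX: "walk (edges w - {e}) X" "walk (edges w - {e}) Y"
    using lk ne off sw by (auto simp: walk_iff)
  show False
  proof (cases "edges X \<inter> edges Y = {}")
    case False
    then obtain dx dy where d: "dx \<in> set X" "dy \<in> set Y" "fst dx = fst dy" by auto
    have "tG (fst dx) \<in> dt ` set X \<union> dh ` set X" "tG (fst dx) \<in> dt ` set Y \<union> dh ` set Y"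
      using tG_in_walk_ends[OF d(1)] tG_in_walk_ends[OF d(2)] d(3) by simp_all
    moreover have "dt (hd X) \<in> dt ` set X \<union> dh ` set X" "dt (hd Y) \<in> dt ` set Y \<union> dh ` set Y"
      using ne by simp_all
    ultimately have "reach (edges w - {e}) (hG e) (tG (fst dx))" "reach (edges w - {e}) (tG e) (tG (fst dx))"
      using reach_within_walk[OF wX(1)] reach_within_walk[OF wX(2)] lk(3,5) by metis+
    then show False using br reach_sym reach_trans by blast
  next
    case True
    have "balanced X" unfolding balanced_def
    proof
      fix g
      have bal: "count_list ?W (g, True) = count_list ?W (g, False)" using a1(4) by (simp add: balanced_def)
      show "count_list X (g, True) = count_list X (g, False)"
      proof (cases "g \<in> edges X")
        case True
        then have "g \<noteq> e" "g \<notin> edges Y" using off \<open>edges X \<inter> edges Y = {}\<close> by blast+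
        then have "(g, b) \<notin> set Y" for b by (metis fst_conv image_eqI)
        then show ?thesis using bal \<open>g \<noteq> e\<close> by (simp add: count_list_0_iff)
      next
        case False
        then have "(g, b) \<notin> set X" for b by (metis fst_conv image_eqI)
        then show ?thesis by (simp add: count_list_0_iff)
      qed
    qed
    moreover have "non_backtracking X" using a1(3) by (simp add: non_backtracking_append non_backtracking_Cons)
    moreover have "walk E X" using a1(1) ne lk by (auto simp: walk_iff)
    ultimately have "abelian_walk E tG hG X" using lk ne by (simp add: abelian_walk_def closed_iff)
    then have "length ?W \<le> length X" using m1 by (simp add: shortest_abelian_def)
    then show False by simp
  qed
qed

definition cycle_link :: "'e set \<Rightarrow> 'e dedge list \<Rightarrow> 'e dedge list \<Rightarrow> 'e dedge list \<Rightarrow> bool" where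
  "cycle_link S C D P \<longleftrightarrow> simple_cycle S C \<and> simple_cycle S D \<and> \<not> edges D \<subseteq> edges C \<and> walk S P \<and>
     dt (hd P) \<in> verts C \<and> dh (last P) \<in> verts D"

lemma cycle_link_barbell_config:
  assumes "barbell_config S C P D"
  shows "cycle_link S C D P"
proof -
  have "D \<noteq> []" using assms by (auto simp: barbell_config_def simple_cycle_def walk_iff)
  then have "\<not> edges D \<subseteq> edges C" using barbell_configD(6)[OF assms] hd_in_set by blast
  then show ?thesis using assms by (simp add: cycle_link_def barbell_config_def)
qed

lemma shortest_link_barbell_config:
  assumes noear: "\<forall>C Q. \<not> ear S C Q" and t: "cycle_link S C D P"
    and min: "\<forall>C' D' P'. cycle_link S C' D' P' \<longrightarrow> length P \<le> length P'"
  shows "barbell_config S C P D"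
proof -
  have a: "simple_cycle S C" "simple_cycle S D" "\<not> edges D \<subseteq> edges C" "walk S P" "dt (hd P) \<in> verts C" "dh (last P) \<in> verts D"
    using t by (auto simp: cycle_link_def)
  have disj: "verts C \<inter> verts D = {}" using ear_if_cycles_meet[OF a(1,2,3)] noear by blast
  have ch: "linked P" "P \<noteq> []" using a(4) by (auto simp: walk_iff)
  have dist: "distinct (map dt P)"
  proof (rule ccontr)
    assume "\<not> distinct (map dt P)"
    then obtain i j where ij: "i < j" "j < length P" "dt (P ! i) = dt (P ! j)"
      by (auto simp: distinct_conv_nth) (metis linorder_neqE_nat)
    obtain p' where p': "walk S p'" "dt (hd p') = dt (hd P)" "dh (last p') = dh (last P)" "length p' < length P"
      using walk_shortcut[OF a(4) ij] by blast
    then have "cycle_link S C D p'" using a by (simp add: cycle_link_def)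
    then show False using min p'(4) by fastforce
  qed
  have offD: "dt (P ! i) \<notin> verts D" if "i < length P" for i
  proof
    assume i: "dt (P ! i) \<in> verts D"
    show False
    proof (cases "i = 0")
      case True then show False using i a(5) disj ch(2) by (auto simp: hd_conv_nth)
    next
      case False
      note tk = walk_take[OF a(4) _ that]
      have "cycle_link S C D (take i P)" using tk False a i by (simp add: cycle_link_def)
      then show False using min tk(4) that by fastforce
    qed
  qed
  have offC: "dt (P ! i) \<notin> verts C" if "0 < i" "i < length P" for i
  proof
    assume i: "dt (P ! i) \<in> verts C"
    note dk = walk_drop[OF a(4) that(2)]
    have "cycle_link S C D (drop i P)" using dk a i by (simp add: cycle_link_def)
    then show False using min dk(4) that by fastforce
  qed
  have "dh (last P) \<notin> dt ` set P"
  proof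
    assume "dh (last P) \<in> dt ` set P"
    then obtain i where "i < length P" "dt (P ! i) = dh (last P)" by (auto simp: in_set_conv_nth)
    then show False using offD a(6) by metis
  qed
  then have nbP: "non_backtracking P" using non_backtracking_if_distinct_tails[OF ch(1) dist] by simp
  show ?thesis unfolding barbell_config_def using a disj nbP dist offC offD by blast
qed

lemma shortest_link_bridge:
  assumes noear: "\<forall>C Q. \<not> ear S C Q" and t: "cycle_link S C D P"
    and min: "\<forall>C' D' P'. cycle_link S C' D' P' \<longrightarrow> length P \<le> length P'" and f: "f \<in> edges P"
  shows "\<not> reach (S - {f}) (tG f) (hG f)"
proof
  assume r: "reach (S - {f}) (tG f) (hG f)"
  have a: "simple_cycle S C" "walk S P" "dt (hd P) \<in> verts C"
    using t by (auto simp: cycle_link_def)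
  have B: "barbell_config S C P D" using shortest_link_barbell_config[OF noear t min] .
  have fS: "f \<in> S" using a(2) f by (auto simp: walk_iff)
  obtain C3 where C3: "simple_cycle S C3" "f \<in> edges C3" using cycle_through_nonbridge[OF fS reach_sym[OF r]] by blast
  have "f \<notin> edges C" using barbell_configD(4)[OF B] f by blast
  then have esc: "\<not> edges C3 \<subseteq> edges C" using C3(2) by blast
  obtain j where j: "j < length P" "fst (P ! j) = f" using f by (auto simp: in_set_conv_nth)
  have "tG f \<in> verts C3" "hG f \<in> verts C3" using simple_cycle_edge_ends[OF C3(1) C3(2)] by auto
  then have dj: "dt (P ! j) \<in> verts C3" using dtail_cases[of "P ! j"] j(2) by auto
  show False
  proof (cases "j = 0")
    case True
    have "P \<noteq> []" using j by auto
    then have "dt (hd P) \<in> verts C3" using dj True by (simp add: hd_conv_nth)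
    then have "verts C \<inter> verts C3 \<noteq> {}" using a(3) by blast
    then show False using ear_if_cycles_meet[OF a(1) C3(1) esc] noear by blast
  next
    case False
    note tk = walk_take[OF a(2) _ j(1)]
    have "cycle_link S C C3 (take j P)" using tk False a C3(1) esc dj by (simp add: cycle_link_def)
    then show False using min tk(4) j False by fastforce
  qed
qed

lemma bar_edges_shortest_link:
  assumes "\<forall>C Q. \<not> ear S C Q" "cycle_link S C D P"
    "\<forall>C' D' P'. cycle_link S C' D' P' \<longrightarrow> length P \<le> length P'"
  shows "bar_edges (barbell_verts C P D) (barbell_edges C P D) tG hG \<subseteq> edges P"
proof
  let ?V = "barbell_verts C P D" and ?E = "barbell_edges C P D"
  fix f assume f: "f \<in> bar_edges ?V ?E tG hG"
  have B: "barbell_config S C P D" using shortest_link_barbell_config[OF assms] .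
  have "\<not> reach (?E - {f}) (tG f) (hG f)"
    using bar_edges_bridge[OF finite_barbell barbell_config_euler_char[OF B] f] .
  moreover have "f \<in> ?E" using f bar_edges_subset by blast
  ultimately show "f \<in> edges P"
    using barbell_cycle_nonbridge[OF B, of f] by (auto simp: barbell_edges_def)
qed

lemma l_Abl_le_length:
  assumes fin: "finite E0" and sub: "E0 \<subseteq> edges w"
    and wt: "\<And>e. e \<in> E0 \<Longrightarrow> (if e \<in> bar_edges V0 E0 tG hG then 4 else 2) \<le> traversals w e"
  shows "l_Abl V0 E0 tG hG \<le> length w"
proof -
  have "l_Abl V0 E0 tG hG \<le> (\<Sum>e\<in>E0. traversals w e)" unfolding l_Abl_def using wt by (intro sum_mono) auto
  also have "\<dots> \<le> (\<Sum>e\<in>edges w. traversals w e)" using sub by (intro sum_mono2) auto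
  also have "\<dots> = length w" using length_eq_sum_traversals[of "edges w" w] by simp
  finally show ?thesis .
qed

lemma l_Abl_ear_le:
  assumes "balanced w" "ear (edges w) C Q"
  shows "l_Abl (ear_verts C Q) (ear_edges C Q) tG hG \<le> length w"
proof (rule l_Abl_le_length)
  show "finite (ear_edges C Q)" "ear_edges C Q \<subseteq> edges w"
    using finite_ear ear_edges_subset[OF assms(2)] by auto
  then show "(if e \<in> bar_edges (ear_verts C Q) (ear_edges C Q) tG hG then 4 else 2) \<le> traversals w e"
    if "e \<in> ear_edges C Q" for e
    using that two_le_traversals[OF assms(1)] ear_not_barbell[OF assms(2)]
    by (auto simp: bar_edges_def)
qed

lemma l_Abl_shortest_link_le:
  assumes "shortest_abelian E w" "\<forall>C Q. \<not> ear (edges w) C Q" "cycle_link (edges w) C D P"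
    "\<forall>C' D' P'. cycle_link (edges w) C' D' P' \<longrightarrow> length P \<le> length P'"
  shows "l_Abl (barbell_verts C P D) (barbell_edges C P D) tG hG \<le> length w"
proof (rule l_Abl_le_length)
  have B: "barbell_config (edges w) C P D" using shortest_link_barbell_config[OF assms(2-4)] .
  show "finite (barbell_edges C P D)" "barbell_edges C P D \<subseteq> edges w"
    using finite_barbell barbell_edges_subset[OF B] by auto
  have bal: "balanced w" using assms(1) by (simp add: shortest_abelian_def abelian_walk_def)
  have bridge: "4 \<le> traversals w e" if "e \<in> edges P" for e
  proof -
    have "e \<in> edges w" using that \<open>barbell_edges C P D \<subseteq> edges w\<close> by (auto simp: barbell_edges_def)
    then show ?thesis
      using four_le_traversals_bridge[OF assms(1) _ shortest_link_bridge[OF assms(2-4) that]] by simp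
  qed
  fix e assume "e \<in> barbell_edges C P D"
  then have "e \<in> edges w" using \<open>barbell_edges C P D \<subseteq> edges w\<close> by blast
  then show "(if e \<in> bar_edges (barbell_verts C P D) (barbell_edges C P D) tG hG then 4 else 2)
      \<le> traversals w e"
    using two_le_traversals[OF bal] bridge subsetD[OF bar_edges_shortest_link[OF assms(2-4)]]
    by (simp del: image_iff)
qed

lemma shortest_abelian_ear_or_barbell_config:
  assumes "shortest_abelian E w"
  shows "(\<exists>C Q. ear (edges w) C Q) \<or> (\<exists>C P D. barbell_config (edges w) C P D)"
proof -
  let ?H = "edges w" and ?VH = "dt ` set w \<union> dh ` set w"
  have w: "walk ?H w" "non_backtracking w" "balanced w"
    using assms by (auto simp: shortest_abelian_def abelian_walk_def walk_iff)
  have ext: "extendable ?H" using extendable_shortest_abelian[OF assms] .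
  have "finite ?H" "?H \<noteq> {}" using w(1) by (auto simp: walk_iff)
  then obtain C where C: "simple_cycle ?H C" using simple_cycle_if_extendable ext by blast
  have "\<not> ?H \<subseteq> edges C" using not_balanced_within_cycle[OF C] w by (auto simp: walk_iff)
  then obtain e where e: "e \<in> ?H" "e \<notin> edges C" by blast
  have ends: "\<forall>e\<in>?H. tG e \<in> ?VH \<and> hG e \<in> ?VH"
    using ends_dedge by fastforce
  have "connected_graph ?VH ?H tG hG"
  proof (rule connected_graphI[of "dt (hd w)"])
    show "dt (hd w) \<in> ?VH" using w(1) by (simp add: walk_iff)
    show "reach ?H (dt (hd w)) x" if "x \<in> ?VH" for x
      using reach_within_walk[OF w(1)] that w(1) by (auto simp: walk_iff)
  qed
  then obtain d0 where "fst d0 \<in> ?H" "fst d0 \<notin> edges C" "dt d0 \<in> verts C"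
    using edge_leaving_cycle[OF C e] ends by blast
  then show ?thesis using ear_or_barbell_config[OF \<open>finite ?H\<close> ext C] by blast
qed

lemma cel_subgraph_below_shortest_abelian:
  assumes "shortest_abelian E w" "\<forall>e\<in>E. tG e \<in> V \<and> hG e \<in> V"
  shows "\<exists>G'\<in>cel_subgraphs V E tG hG. l_Abl (fst G') (snd G') tG hG \<le> length w"
proof -
  have HE: "edges w \<subseteq> E" and bal: "balanced w"
    using assms(1) by (auto simp: shortest_abelian_def abelian_walk_def walk_iff)
  show ?thesis
  proof (cases "\<exists>C Q. ear (edges w) C Q")
    case True
    then obtain C Q where Q: "ear (edges w) C Q" by blast
    show ?thesis using ear_cel_subgraph[OF Q HE assms(2)] l_Abl_ear_le[OF bal Q] by force
  next
    case False
    then obtain C P D where "barbell_config (edges w) C P D"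
      using shortest_abelian_ear_or_barbell_config[OF assms(1)] by blast
    then have "cycle_link (edges w) C D P" by (rule cycle_link_barbell_config)
    then obtain C D P where link: "cycle_link (edges w) C D P"
      and min: "\<forall>C' D' P'. cycle_link (edges w) C' D' P' \<longrightarrow> length P \<le> length P'"
      using ex_has_least_nat[of "\<lambda>(C, D, P). cycle_link (edges w) C D P" "(C, D, P)"
          "\<lambda>(C, D, P). length P"] by auto
    have "barbell_config (edges w) C P D" using shortest_link_barbell_config[OF _ link min] False by blast
    then show ?thesis using barbell_config_cel_subgraph[OF _ HE assms(2)]
        l_Abl_shortest_link_le[OF assms(1) _ link min] False by force
  qed
qed

end

lemma shortest_abelian_exists:
  assumes "abelian_walk E tG hG w"
  shows "\<exists>w0. graph.shortest_abelian tG hG E w0"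
  using ex_has_least_nat[of "abelian_walk E tG hG" w length] assms
  by (auto simp: graph.shortest_abelian_def)

lemma Abl_shortest_abelian:
  assumes "graph.shortest_abelian tG hG E w"
  shows "Abl E tG hG = enat (length w)"
  using assms unfolding Abl_def graph.shortest_abelian_def
  by (intro antisym Inf_lower Inf_greatest) auto

theorem lemma2p5:
  fixes V :: "'v set" and E :: "'e set" and tG hG :: "'e \<Rightarrow> 'v"
  assumes "\<forall>e\<in>E. tG e \<in> V \<and> hG e \<in> V"
  shows "Abl E tG hG = (INF G'\<in>cel_subgraphs V E tG hG. enat (l_Abl (fst G') (snd G') tG hG))
    \<and> (cel_subgraphs V E tG hG = {} \<longrightarrow>
         Abl E tG hG = \<infinity> \<and> \<not> (\<exists>w. abelian_walk E tG hG w))"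
proof -
  interpret graph tG hG .
  let ?I = "INF G'\<in>cel_subgraphs V E tG hG. enat (l_Abl (fst G') (snd G') tG hG)"
  have upper: "Abl E tG hG \<le> ?I"
    by (rule INF_greatest) (auto intro: Abl_le_l_Abl)
  have lower: "?I \<le> Abl E tG hG \<and> cel_subgraphs V E tG hG \<noteq> {}" if w: "abelian_walk E tG hG w" for w
  proof -
    obtain w0 where w0: "shortest_abelian E w0" using shortest_abelian_exists[OF w] by blast
    then obtain G' where "G' \<in> cel_subgraphs V E tG hG" "l_Abl (fst G') (snd G') tG hG \<le> length w0"
      using cel_subgraph_below_shortest_abelian[OF _ assms] by blast
    then show ?thesis using Abl_shortest_abelian[OF w0] by (auto intro: INF_lower2)
  qed
  show ?thesis
  proof (cases "\<exists>w. abelian_walk E tG hG w")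
    case True
    then show ?thesis using upper lower by (blast intro: antisym)
  next
    case False
    then have "Abl E tG hG = \<infinity>" by (simp add: Abl_def top_enat_def)
    then show ?thesis using False upper by (simp add: antisym)
  qed
qed

end
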